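(* The maps $m_{\mathcal{A}}((\pi,\mathcal{H},\Omega))$ are well-defined morphisms $\mathbf{GNS}^{\bullet}_{\mathcal{A}}(\mathbf{rest}_{\mathcal{A}}(\pi,\mathcal{H},\Omega))\to(\pi,\mathcal{H},\Omega)$ in $\mathbf{Rep}^{\bullet}(\mathcal{A})$, and the assignment $\mathcal{A}\mapsto m_{\mathcal{A}}$, with $m_{\mathcal{A}}:\mathbf{GNS}^{\bullet}_{\mathcal{A}}\circ\mathbf{rest}_{\mathcal{A}}\Rightarrow\mathrm{id}_{\mathbf{Rep}^{\bullet}(\mathcal{A})}$, defines a modification $m$ from the vertical composite "first $\mathbf{rest}$, then $\mathbf{GNS}^{\bullet}$" to $\mathrm{id}_{\mathbf{Rep}^{\bullet}}$. Furthermore, for each unital $C^*$-algebra $\mathcal{A}$, $m_{\mathcal{A}}$ restricts to a well-defined and vertically invertible natural transformation on the full subcategory $\mathbf{Rep}^{\odot}(\mathcal{A})$ of cyclic representations.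
   Context: All $C^*$-algebras are unital; morphisms $f:\mathcal{A}'\to\mathcal{A}$ are bounded linear maps with $f(a^* )=f(a)^*$, $f(ab)=f(a)f(b)$, $f(1)=1$; $\mathbf{C^*\text{-}Alg}$ is viewed as a 2-category with only identity 2-morphisms and $\mathbf{Cat}$ as the strict 2-category of categories, functors, natural transformations. A state on $\mathcal{A}$ is a bounded linear $\omega:\mathcal{A}\to\mathbb{C}$ with $\omega(1)=1$, $\omega(a^*a)\ge0$. $\mathbf{States}(\mathcal{A})$ is the discrete category of states, $\mathbf{States}(f)(\omega)=\omega\circ f$. $\mathbf{Rep}^{\bullet}(\mathcal{A})$ has objects $(\pi,\mathcal{H},\Omega)$ ($\mathcal{H}$ Hilbert space, $\pi:\mathcal{A}\to\mathcal{B}(\mathcal{H})$ unital $*$-homomorphism, $\Omega\in\mathcal{H}$ unit vector) and morphisms $(\pi,\mathcal{H},\Omega)\to(\pi',\mathcal{H}',\Omega')$ the bounded linear $L$ with $L\pi(a)=\pi'(a)L$ for all $a$, $L\Omega=\Omega'$, $L^*L=\mathrm{id}_{\mathcal{H}}$; $\mathbf{Rep}^{\bullet}(f)$ sends $(\pi,\mathcal{H},\Omega)\mapsto(\pi\circ f,\mathcal{H},\Omega)$, $L\mapsto L$. $\Omega$ is cyclic if $\{\pi(a)\Omega:a\in\mathcal{A}\}$ is dense in $\mathcal{H}$; $\mathbf{Rep}^{\odot}(\mathcal{A})$ is the full subcategory of $\mathbf{Rep}^{\bullet}(\mathcal{A})$ on triples with $\Omega$ cyclic. $\mathbf{rest}_{\mathcal{A}}$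 sends $(\pi,\mathcal{H},\Omega)$ to the state $a\mapsto\langle\Omega,\pi(a)\Omega\rangle$ and morphisms to identities; $\mathbf{rest}_f$ is the identity. GNS: for a state $\omega$ on $\mathcal{A}$, $\mathcal{N}_\omega=\{x:\omega(x^*x)=0\}$, $\mathcal{H}_\omega$ is the completion of $\mathcal{A}/\mathcal{N}_\omega$ under $\langle[b],[a]\rangle_\omega=\omega(b^*a)$, $\pi_\omega(a)$ extends $[b]\mapsto[ab]$, $\mathbf{GNS}^{\bullet}_{\mathcal{A}}(\omega)=(\pi_\omega,\mathcal{H}_\omega,[1_{\mathcal{A}}])$, and $\mathbf{GNS}^{\bullet}_f(\omega)$ is the extension of $[a']\mapsto[f(a')]$, a morphism $(\pi_{\omega\circ f},\mathcal{H}_{\omega\circ f},[1_{\mathcal{A}'}])\to(\pi_\omega\circ f,\mathcal{H}_\omega,[1_{\mathcal{A}}])$. For a pointed representation $(\pi,\mathcal{H},\Omega)$ of $\mathcal{A}$ with $\omega=\mathbf{rest}_{\mathcal{A}}(\pi,\mathcal{H},\Omega)$, $m_{\mathcal{A}}((\pi,\mathcal{H},\Omega)):\mathcal{H}_\omega\to\mathcal{H}$ is the bounded extension of $[a]\mapsto\pi(a)\Omega$. A modification $m:\sigma\Rrightarrow\rho$ between oplax-natural transformations $\sigma,\rho:F\Rightarrow G$ (components $\sigma(x):F(x)\to G(x)$, 2-cells $\sigma(\alpha):\sigma(y)\circ F(\alpha)\Rightarrow G(\alpha)\circ\sigma(x)$ for $\alpha:x\to y$) assigns to each object $x$ a 2-morphism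 $m(x):\sigma(x)\Rightarrow\rho(x)$ such that $\rho(\alpha)\cdot(m(y)\circ\mathrm{id}_{F(\alpha)})=(\mathrm{id}_{G(\alpha)}\circ m(x))\cdot\sigma(\alpha)$ for every 1-morphism $\alpha:x\to y$. Here the vertical composite "first $\mathbf{rest}$, then $\mathbf{GNS}^{\bullet}$" has components $\mathbf{GNS}^{\bullet}_{\mathcal{A}}\circ\mathbf{rest}_{\mathcal{A}}$ and 2-cells $\mathbf{GNS}^{\bullet}_f\circ\mathrm{id}_{\mathbf{rest}_{\mathcal{A}}}$ (for $f:\mathcal{A}'\to\mathcal{A}$), and $\mathrm{id}_{\mathbf{Rep}^{\bullet}}$ has identity components and 2-cells. *)

theory Defs
  imports Complex_Main
begin

record 'a cstar_alg =
  ca_add   :: "'a \<Rightarrow> 'a \<Rightarrow> 'a"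
  ca_zero  :: 'a
  ca_scale :: "complex \<Rightarrow> 'a \<Rightarrow> 'a"
  ca_mul   :: "'a \<Rightarrow> 'a \<Rightarrow> 'a"
  ca_one   :: 'a
  ca_star  :: "'a \<Rightarrow> 'a"
  ca_norm  :: "'a \<Rightarrow> real"

definition ca_sub :: "'a cstar_alg \<Rightarrow> 'a \<Rightarrow> 'a \<Rightarrow> 'a" where
  "ca_sub A a b = ca_add A a (ca_scale A (-1) b)"

definition cstar_algebra :: "'a cstar_alg \<Rightarrow> bool" where
  "cstar_algebra A \<longleftrightarrow>
     \<comment> \<open>complex vector space\<close>
     (\<forall>a b c. ca_add A (ca_add A a b) c = ca_add A a (ca_add A b c)) \<and>
     (\<forall>a b. ca_add A a b = ca_add A b a) \<and>
     (\<forall>a. ca_add A (ca_zero A) a = a) \<and>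
     (\<forall>a. \<exists>b. ca_add A a b = ca_zero A) \<and>
     (\<forall>a. ca_scale A 1 a = a) \<and>
     (\<forall>c d a. ca_scale A c (ca_scale A d a) = ca_scale A (c * d) a) \<and>
     (\<forall>c d a. ca_scale A (c + d) a = ca_add A (ca_scale A c a) (ca_scale A d a)) \<and>
     (\<forall>c a b. ca_scale A c (ca_add A a b) = ca_add A (ca_scale A c a) (ca_scale A c b)) \<and>
     \<comment> \<open>unital associative algebra\<close>
     (\<forall>a b c. ca_mul A (ca_mul A a b) c = ca_mul A a (ca_mul A b c)) \<and>
     (\<forall>a. ca_mul A (ca_one A) a = a \<and> ca_mul A a (ca_one A) = a) \<and>
     (\<forall>a b c. ca_mul A a (ca_add A b c) = ca_add A (ca_mul A a b) (ca_mul A a c)) \<and>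
     (\<forall>a b c. ca_mul A (ca_add A a b) c = ca_add A (ca_mul A a c) (ca_mul A b c)) \<and>
     (\<forall>z a b. ca_mul A (ca_scale A z a) b = ca_scale A z (ca_mul A a b) \<and>
              ca_mul A a (ca_scale A z b) = ca_scale A z (ca_mul A a b)) \<and>
     \<comment> \<open>involution\<close>
     (\<forall>a. ca_star A (ca_star A a) = a) \<and>
     (\<forall>a b. ca_star A (ca_add A a b) = ca_add A (ca_star A a) (ca_star A b)) \<and>
     (\<forall>z a. ca_star A (ca_scale A z a) = ca_scale A (cnj z) (ca_star A a)) \<and>
     (\<forall>a b. ca_star A (ca_mul A a b) = ca_mul A (ca_star A b) (ca_star A a)) \<and>
     \<comment> \<open>submultiplicative norm\<close>
     (\<forall>a. ca_norm A a = 0 \<longleftrightarrow> a = ca_zero A) \<and>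
     (\<forall>z a. ca_norm A (ca_scale A z a) = cmod z * ca_norm A a) \<and>
     (\<forall>a b. ca_norm A (ca_add A a b) \<le> ca_norm A a + ca_norm A b) \<and>
     (\<forall>a b. ca_norm A (ca_mul A a b) \<le> ca_norm A a * ca_norm A b) \<and>
     \<comment> \<open>completeness\<close>
     (\<forall>s. (\<forall>e>0. \<exists>N. \<forall>m\<ge>N. \<forall>n\<ge>N. ca_norm A (ca_sub A (s m) (s n)) < e) \<longrightarrow>
          (\<exists>l. (\<lambda>n. ca_norm A (ca_sub A (s n) l)) \<longlonglongrightarrow> 0)) \<and>
     \<comment> \<open>C*-identity\<close>
     (\<forall>a. ca_norm A (ca_mul A (ca_star A a) a) = (ca_norm A a)\<^sup>2)"

definition cstar_hom :: "'b cstar_alg \<Rightarrow> 'a cstar_alg \<Rightarrow> ('b \<Rightarrow> 'a) \<Rightarrow> bool" where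
  "cstar_hom A' A f \<longleftrightarrow>
     (\<forall>a b. f (ca_add A' a b) = ca_add A (f a) (f b)) \<and>
     (\<forall>z a. f (ca_scale A' z a) = ca_scale A z (f a)) \<and>
     (\<exists>C. \<forall>a. ca_norm A (f a) \<le> C * ca_norm A' a) \<and>
     (\<forall>a. f (ca_star A' a) = ca_star A (f a)) \<and>
     (\<forall>a b. f (ca_mul A' a b) = ca_mul A (f a) (f b)) \<and>
     f (ca_one A') = ca_one A"

definition is_state :: "'a cstar_alg \<Rightarrow> ('a \<Rightarrow> complex) \<Rightarrow> bool" where
  "is_state A \<omega> \<longleftrightarrow>
     (\<forall>a b. \<omega> (ca_add A a b) = \<omega> a + \<omega> b) \<and>
     (\<forall>z a. \<omega> (ca_scale A z a) = z * \<omega> a) \<and>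
     (\<exists>C. \<forall>a. cmod (\<omega> a) \<le> C * ca_norm A a) \<and>
     \<omega> (ca_one A) = 1 \<and>
     (\<forall>a. Im (\<omega> (ca_mul A (ca_star A a) a)) = 0 \<and> Re (\<omega> (ca_mul A (ca_star A a) a)) \<ge> 0)"

record 'h hilb =
  hs_carrier :: "'h set"
  hs_add     :: "'h \<Rightarrow> 'h \<Rightarrow> 'h"
  hs_zero    :: 'h
  hs_scale   :: "complex \<Rightarrow> 'h \<Rightarrow> 'h"
  hs_inner   :: "'h \<Rightarrow> 'h \<Rightarrow> complex"  \<comment> \<open>antilinear in the first, linear in the second argument\<close>

definition hs_sub :: "'h hilb \<Rightarrow> 'h \<Rightarrow> 'h \<Rightarrow> 'h" where
  "hs_sub H x y = hs_add H x (hs_scale H (-1) y)"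

definition hs_norm :: "'h hilb \<Rightarrow> 'h \<Rightarrow> real" where
  "hs_norm H x = sqrt (Re (hs_inner H x x))"

definition hs_cauchy :: "'h hilb \<Rightarrow> (nat \<Rightarrow> 'h) \<Rightarrow> bool" where
  "hs_cauchy H s \<longleftrightarrow> (\<forall>e>0. \<exists>N. \<forall>m\<ge>N. \<forall>n\<ge>N. hs_norm H (hs_sub H (s m) (s n)) < e)"

definition hs_tendsto :: "'h hilb \<Rightarrow> (nat \<Rightarrow> 'h) \<Rightarrow> 'h \<Rightarrow> bool" where
  "hs_tendsto H s l \<longleftrightarrow> l \<in> hs_carrier H \<and> (\<lambda>n. hs_norm H (hs_sub H (s n) l)) \<longlonglongrightarrow> 0"

definition hs_lim :: "'h hilb \<Rightarrow> (nat \<Rightarrow> 'h) \<Rightarrow> 'h" where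
  "hs_lim H s = (THE l. hs_tendsto H s l)"

definition hilbert_space :: "'h hilb \<Rightarrow> bool" where
  "hilbert_space H \<longleftrightarrow>
     hs_zero H \<in> hs_carrier H \<and>
     (\<forall>x\<in>hs_carrier H. \<forall>y\<in>hs_carrier H. hs_add H x y \<in> hs_carrier H) \<and>
     (\<forall>c. \<forall>x\<in>hs_carrier H. hs_scale H c x \<in> hs_carrier H) \<and>
     (\<forall>x\<in>hs_carrier H. \<forall>y\<in>hs_carrier H. \<forall>z\<in>hs_carrier H.
         hs_add H (hs_add H x y) z = hs_add H x (hs_add H y z)) \<and>
     (\<forall>x\<in>hs_carrier H. \<forall>y\<in>hs_carrier H. hs_add H x y = hs_add H y x) \<and>
     (\<forall>x\<in>hs_carrier H. hs_add H (hs_zero H) x = x) \<and>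
     (\<forall>x\<in>hs_carrier H. \<exists>y\<in>hs_carrier H. hs_add H x y = hs_zero H) \<and>
     (\<forall>x\<in>hs_carrier H. hs_scale H 1 x = x) \<and>
     (\<forall>c d. \<forall>x\<in>hs_carrier H. hs_scale H c (hs_scale H d x) = hs_scale H (c * d) x) \<and>
     (\<forall>c d. \<forall>x\<in>hs_carrier H. hs_scale H (c + d) x = hs_add H (hs_scale H c x) (hs_scale H d x)) \<and>
     (\<forall>c. \<forall>x\<in>hs_carrier H. \<forall>y\<in>hs_carrier H.
         hs_scale H c (hs_add H x y) = hs_add H (hs_scale H c x) (hs_scale H c y)) \<and>
     (\<forall>x\<in>hs_carrier H. \<forall>y\<in>hs_carrier H. \<forall>z\<in>hs_carrier H.
         hs_inner H x (hs_add H y z) = hs_inner H x y + hs_inner H x z) \<and>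
     (\<forall>c. \<forall>x\<in>hs_carrier H. \<forall>y\<in>hs_carrier H. hs_inner H x (hs_scale H c y) = c * hs_inner H x y) \<and>
     (\<forall>x\<in>hs_carrier H. \<forall>y\<in>hs_carrier H. hs_inner H y x = cnj (hs_inner H x y)) \<and>
     (\<forall>x\<in>hs_carrier H. Re (hs_inner H x x) \<ge> 0) \<and>
     (\<forall>x\<in>hs_carrier H. hs_inner H x x = 0 \<longrightarrow> x = hs_zero H) \<and>
     (\<forall>s. (\<forall>n. s n \<in> hs_carrier H) \<and> hs_cauchy H s \<longrightarrow> (\<exists>l. hs_tendsto H s l))"

definition hs_bounded_linear :: "'h hilb \<Rightarrow> 'k hilb \<Rightarrow> ('h \<Rightarrow> 'k) \<Rightarrow> bool" where
  "hs_bounded_linear H K T \<longleftrightarrow>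
     (\<forall>x\<in>hs_carrier H. T x \<in> hs_carrier K) \<and>
     (\<forall>x\<in>hs_carrier H. \<forall>y\<in>hs_carrier H. T (hs_add H x y) = hs_add K (T x) (T y)) \<and>
     (\<forall>c. \<forall>x\<in>hs_carrier H. T (hs_scale H c x) = hs_scale K c (T x)) \<and>
     (\<exists>C. \<forall>x\<in>hs_carrier H. hs_norm K (T x) \<le> C * hs_norm H x)"

definition hs_adjoint :: "'h hilb \<Rightarrow> 'k hilb \<Rightarrow> ('h \<Rightarrow> 'k) \<Rightarrow> ('k \<Rightarrow> 'h) \<Rightarrow> bool" where
  "hs_adjoint H K T T' \<longleftrightarrow>
     (\<forall>y\<in>hs_carrier K. T' y \<in> hs_carrier H) \<and>
     (\<forall>x\<in>hs_carrier H. \<forall>y\<in>hs_carrier K. hs_inner K (T x) y = hs_inner H x (T' y))"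

definition is_rep :: "'a cstar_alg \<Rightarrow> ('a \<Rightarrow> 'h \<Rightarrow> 'h) \<Rightarrow> 'h hilb \<Rightarrow> bool" where
  "is_rep A \<pi> H \<longleftrightarrow>
     hilbert_space H \<and>
     (\<forall>a. hs_bounded_linear H H (\<pi> a)) \<and>
     (\<forall>a b. \<forall>x\<in>hs_carrier H. \<pi> (ca_add A a b) x = hs_add H (\<pi> a x) (\<pi> b x)) \<and>
     (\<forall>z a. \<forall>x\<in>hs_carrier H. \<pi> (ca_scale A z a) x = hs_scale H z (\<pi> a x)) \<and>
     (\<forall>a b. \<forall>x\<in>hs_carrier H. \<pi> (ca_mul A a b) x = \<pi> a (\<pi> b x)) \<and>
     (\<forall>x\<in>hs_carrier H. \<pi> (ca_one A) x = x) \<and>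
     (\<forall>a. hs_adjoint H H (\<pi> a) (\<pi> (ca_star A a)))"

definition is_prep :: "'a cstar_alg \<Rightarrow> ('a \<Rightarrow> 'h \<Rightarrow> 'h) \<Rightarrow> 'h hilb \<Rightarrow> 'h \<Rightarrow> bool" where
  "is_prep A \<pi> H \<Omega> \<longleftrightarrow> is_rep A \<pi> H \<and> \<Omega> \<in> hs_carrier H \<and> hs_norm H \<Omega> = 1"

definition is_cyclic :: "('a \<Rightarrow> 'h \<Rightarrow> 'h) \<Rightarrow> 'h hilb \<Rightarrow> 'h \<Rightarrow> bool" where
  "is_cyclic \<pi> H \<Omega> \<longleftrightarrow>
     (\<forall>x\<in>hs_carrier H. \<forall>e>0. \<exists>a. hs_norm H (hs_sub H x (\<pi> a \<Omega>)) < e)"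

definition is_rep_mor ::
  "'a cstar_alg \<Rightarrow> ('a \<Rightarrow> 'h \<Rightarrow> 'h) \<Rightarrow> 'h hilb \<Rightarrow> 'h \<Rightarrow>
   ('a \<Rightarrow> 'k \<Rightarrow> 'k) \<Rightarrow> 'k hilb \<Rightarrow> 'k \<Rightarrow> ('h \<Rightarrow> 'k) \<Rightarrow> bool" where
  "is_rep_mor A \<pi> H \<Omega> \<pi>' H' \<Omega>' L \<longleftrightarrow>
     hs_bounded_linear H H' L \<and>
     (\<forall>a. \<forall>x\<in>hs_carrier H. L (\<pi> a x) = \<pi>' a (L x)) \<and>
     L \<Omega> = \<Omega>' \<and>
     (\<exists>L'. hs_adjoint H H' L L' \<and> (\<forall>x\<in>hs_carrier H. L' (L x) = x))"

definition rest :: "('a \<Rightarrow> 'h \<Rightarrow> 'h) \<Rightarrow> 'h hilb \<Rightarrow> 'h \<Rightarrow> 'a \<Rightarrow> complex" where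
  "rest \<pi> H \<Omega> = (\<lambda>a. hs_inner H \<Omega> (\<pi> a \<Omega>))"

text \<open>The completion of \<open>\<A>/\<N>\<^sub>\<omega>\<close> is realised as classes of sequences in \<open>\<A>\<close> that are Cauchy for
  the seminorm a |-> sqrt(omega(a* a)), modulo sequences tending to \<open>0\<close> in that seminorm.
  The class \<open>[a]\<close> of \<open>a \<in> \<A>\<close> is the class of the constant sequence.\<close>

definition gns_p :: "'a cstar_alg \<Rightarrow> ('a \<Rightarrow> complex) \<Rightarrow> 'a \<Rightarrow> real" where
  "gns_p A \<omega> a = sqrt (Re (\<omega> (ca_mul A (ca_star A a) a)))"

definition gns_cauchy :: "'a cstar_alg \<Rightarrow> ('a \<Rightarrow> complex) \<Rightarrow> (nat \<Rightarrow> 'a) \<Rightarrow> bool" where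
  "gns_cauchy A \<omega> x \<longleftrightarrow> (\<forall>e>0. \<exists>N. \<forall>m\<ge>N. \<forall>n\<ge>N. gns_p A \<omega> (ca_sub A (x m) (x n)) < e)"

definition gns_class :: "'a cstar_alg \<Rightarrow> ('a \<Rightarrow> complex) \<Rightarrow> (nat \<Rightarrow> 'a) \<Rightarrow> (nat \<Rightarrow> 'a) set" where
  "gns_class A \<omega> x =
     {y. gns_cauchy A \<omega> y \<and> (\<lambda>n. gns_p A \<omega> (ca_sub A (x n) (y n))) \<longlonglongrightarrow> 0}"

definition gns_rep :: "(nat \<Rightarrow> 'a) set \<Rightarrow> nat \<Rightarrow> 'a" where
  "gns_rep X = (SOME x. x \<in> X)"

definition gns_space :: "'a cstar_alg \<Rightarrow> ('a \<Rightarrow> complex) \<Rightarrow> (nat \<Rightarrow> 'a) set hilb" where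
  "gns_space A \<omega> =
     \<lparr> hs_carrier = {gns_class A \<omega> x | x. gns_cauchy A \<omega> x},
       hs_add = (\<lambda>X Y. gns_class A \<omega> (\<lambda>n. ca_add A (gns_rep X n) (gns_rep Y n))),
       hs_zero = gns_class A \<omega> (\<lambda>n. ca_zero A),
       hs_scale = (\<lambda>c X. gns_class A \<omega> (\<lambda>n. ca_scale A c (gns_rep X n))),
       hs_inner = (\<lambda>X Y. lim (\<lambda>n. \<omega> (ca_mul A (ca_star A (gns_rep X n)) (gns_rep Y n)))) \<rparr>"

definition gns_vec :: "'a cstar_alg \<Rightarrow> ('a \<Rightarrow> complex) \<Rightarrow> 'a \<Rightarrow> (nat \<Rightarrow> 'a) set" where
  "gns_vec A \<omega> a = gns_class A \<omega> (\<lambda>n. a)"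

definition gns_pi :: "'a cstar_alg \<Rightarrow> ('a \<Rightarrow> complex) \<Rightarrow> 'a \<Rightarrow> (nat \<Rightarrow> 'a) set \<Rightarrow> (nat \<Rightarrow> 'a) set" where
  "gns_pi A \<omega> a X = gns_class A \<omega> (\<lambda>n. ca_mul A a (gns_rep X n))"

text \<open>GNS_f(omega) for \<open>f : \<A>' \<rightarrow> \<A>\<close> and a state \<open>\<omega>\<close> on \<open>\<A>\<close>: the extension of \<open>[a'] \<mapsto> [f a']\<close>,
  a map \<open>\<H>\<^sub>\<omega>\<^sub>\<circ>\<^sub>f \<rightarrow> \<H>\<^sub>\<omega>\<close>.\<close>
definition gns_mor :: "'a cstar_alg \<Rightarrow> ('b \<Rightarrow> 'a) \<Rightarrow> ('a \<Rightarrow> complex) \<Rightarrow> (nat \<Rightarrow> 'b) set \<Rightarrow> (nat \<Rightarrow> 'a) set" where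
  "gns_mor A f \<omega> X' = gns_class A \<omega> (\<lambda>n. f (gns_rep X' n))"

text \<open>\<open>m\<^sub>\<A>((\<pi>,\<H>,\<Omega>))\<close>: the bounded extension of \<open>[a] \<mapsto> \<pi>(a)\<Omega>\<close> to \<open>\<H>\<^sub>\<omega>\<close>, \<open>\<omega> = rest(\<pi>,\<H>,\<Omega>)\<close>.\<close>
definition m_map :: "('a \<Rightarrow> 'h \<Rightarrow> 'h) \<Rightarrow> 'h hilb \<Rightarrow> 'h \<Rightarrow> (nat \<Rightarrow> 'a) set \<Rightarrow> 'h" where
  "m_map \<pi> H \<Omega> X = hs_lim H (\<lambda>n. \<pi> (gns_rep X n) \<Omega>)"

end

(*
  For a pointed representation (pi, H, Omega) the vector state omega(a) = <Omega, pi(a) Omega>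
  satisfies omega(a* b) = <pi(a) Omega, pi(b) Omega>, i.e. psi(a) = pi(a) Omega realises omega as a
  Gram kernel. Hence the GNS space of omega (Cauchy sequences in A for the seminorm
  a |-> omega(a* a)^(1/2), modulo null sequences) is isometric, via m(X) = lim psi(x_n), to the
  closure of psi(A) in H. Linearity, intertwining, m[1] = Omega and naturality in L and in f all
  follow by passing to the limit along representative sequences. The adjoint required of a
  morphism is m^(-1) composed with the orthogonal projection onto that closure; for cyclic Omega the
  closure is all of H and m is invertible.

  The only C*-theory needed is boundedness of omega: for self-adjoint h of norm at most 1/2 the
  element 1 - h is the square (1 - y)^2 of a self-adjoint y, the fixed point of the contraction
  y |-> (h + y^2)/2; with h = a* a / (2 |a|^2) this gives |pi(a) Omega|^2 <= 2 |a|^2.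
*)

theory Submission
  imports Defs
begin

section \<open>Hilbert spaces\<close>

lemma LIMSEQ_zero_squeeze:
  fixes a b :: "nat \<Rightarrow> real"
  assumes "\<And>n. 0 \<le> a n" and "\<And>n. a n \<le> b n" and "b \<longlonglongrightarrow> 0"
  shows "a \<longlonglongrightarrow> 0"
  by (rule real_tendsto_sandwich[of "\<lambda>n. 0" a sequentially b]) (use assms in auto)

locale hilbert =
  fixes H :: "'h hilb"
  assumes hilbert_space: "hilbert_space H"
begin

abbreviation "C \<equiv> hs_carrier H"
abbreviation hadd (infixl "\<oplus>" 65) where "x \<oplus> y \<equiv> hs_add H x y"
abbreviation hscale (infixr "\<cdot>" 75) where "c \<cdot> x \<equiv> hs_scale H c x"
abbreviation hsub (infixl "\<ominus>" 65) where "x \<ominus> y \<equiv> hs_sub H x y"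
abbreviation hzero ("\<zero>") where "\<zero> \<equiv> hs_zero H"
abbreviation hinner ("\<langle>_,_\<rangle>") where "\<langle>x,y\<rangle> \<equiv> hs_inner H x y"
abbreviation hnorm ("\<parallel>_\<parallel>") where "\<parallel>x\<parallel> \<equiv> hs_norm H x"

lemma hs_zero_closed [simp]: "\<zero> \<in> C"
  and hs_add_closed [simp]: "x \<in> C \<Longrightarrow> y \<in> C \<Longrightarrow> x \<oplus> y \<in> C"
  and hs_scale_closed [simp]: "x \<in> C \<Longrightarrow> c \<cdot> x \<in> C"
  and hs_add_assoc: "x \<in> C \<Longrightarrow> y \<in> C \<Longrightarrow> w \<in> C \<Longrightarrow> (x \<oplus> y) \<oplus> w = x \<oplus> (y \<oplus> w)"
  and hs_add_commute: "x \<in> C \<Longrightarrow> y \<in> C \<Longrightarrow> x \<oplus> y = y \<oplus> x"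
  and hs_add_zero_left: "x \<in> C \<Longrightarrow> \<zero> \<oplus> x = x"
  and hs_inner_add_right [simp]: "x \<in> C \<Longrightarrow> y \<in> C \<Longrightarrow> w \<in> C \<Longrightarrow> \<langle>x, y \<oplus> w\<rangle> = \<langle>x,y\<rangle> + \<langle>x,w\<rangle>"
  and hs_inner_scale_right [simp]: "x \<in> C \<Longrightarrow> y \<in> C \<Longrightarrow> \<langle>x, c \<cdot> y\<rangle> = c * \<langle>x,y\<rangle>"
  and hs_inner_commute: "x \<in> C \<Longrightarrow> y \<in> C \<Longrightarrow> \<langle>y,x\<rangle> = cnj \<langle>x,y\<rangle>"
  and hs_inner_self_nonneg: "x \<in> C \<Longrightarrow> 0 \<le> Re \<langle>x,x\<rangle>"
  and hs_inner_self_eq_zero: "x \<in> C \<Longrightarrow> \<langle>x,x\<rangle> = 0 \<Longrightarrow> x = \<zero>"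
  by (use hilbert_space in \<open>unfold hilbert_space_def, meson\<close>)+

lemma hs_complete: "(\<And>n. s n \<in> C) \<Longrightarrow> hs_cauchy H s \<Longrightarrow> \<exists>l. hs_tendsto H s l"
  using hilbert_space unfolding hilbert_space_def by blast

lemma hs_sub_closed [simp]: "x \<in> C \<Longrightarrow> y \<in> C \<Longrightarrow> x \<ominus> y \<in> C"
  unfolding hs_sub_def by simp

lemma hs_inner_add_left [simp]: "x \<in> C \<Longrightarrow> y \<in> C \<Longrightarrow> w \<in> C \<Longrightarrow> \<langle>y \<oplus> w, x\<rangle> = \<langle>y,x\<rangle> + \<langle>w,x\<rangle>"
  by (metis hs_add_closed complex_cnj_add hs_inner_add_right hs_inner_commute)

lemma hs_inner_scale_left [simp]: "x \<in> C \<Longrightarrow> y \<in> C \<Longrightarrow> \<langle>c \<cdot> y, x\<rangle> = cnj c * \<langle>y,x\<rangle>"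
  by (metis complex_cnj_mult hs_inner_commute hs_inner_scale_right hs_scale_closed)

lemma hs_inner_diff_right [simp]: "x \<in> C \<Longrightarrow> y \<in> C \<Longrightarrow> w \<in> C \<Longrightarrow> \<langle>x, y \<ominus> w\<rangle> = \<langle>x,y\<rangle> - \<langle>x,w\<rangle>"
  and hs_inner_diff_left [simp]: "x \<in> C \<Longrightarrow> y \<in> C \<Longrightarrow> w \<in> C \<Longrightarrow> \<langle>y \<ominus> w, x\<rangle> = \<langle>y,x\<rangle> - \<langle>w,x\<rangle>"
  unfolding hs_sub_def by simp_all

lemma hs_inner_zero_left [simp]: "x \<in> C \<Longrightarrow> \<langle>\<zero>, x\<rangle> = 0"
  using hs_inner_add_left[of x \<zero> \<zero>] hs_add_zero_left[of \<zero>] by simp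

lemma hs_inner_zero_right [simp]: "x \<in> C \<Longrightarrow> \<langle>x, \<zero>\<rangle> = 0"
  using hs_inner_commute[of \<zero> x] by simp

lemma hs_inner_self_real: "x \<in> C \<Longrightarrow> \<langle>x,x\<rangle> = complex_of_real (Re \<langle>x,x\<rangle>)"
proof -
  assume "x \<in> C"
  then have "Im \<langle>x,x\<rangle> = Im (cnj \<langle>x,x\<rangle>)" using hs_inner_commute[of x x] by simp
  then show ?thesis by (simp add: complex_eq_iff)
qed

lemma hs_eq_if_diff_eq_zero:
  assumes x: "x \<in> C" and y: "y \<in> C" and "x \<ominus> y = \<zero>"
  shows "x = y"
proof -
  have neg: "(-1) \<cdot> y \<oplus> y = \<zero>" by (rule hs_inner_self_eq_zero) (use y in simp_all)
  have "y = (x \<oplus> (-1) \<cdot> y) \<oplus> y" using assms hs_add_zero_left[OF y] unfolding hs_sub_def by simp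
  also have "\<dots> = x \<oplus> \<zero>" using x y by (simp add: hs_add_assoc neg)
  also have "\<dots> = x" using x by (simp add: hs_add_commute[of x] hs_add_zero_left)
  finally show ?thesis by simp
qed

lemma hs_eqI_inner_diff: "x \<in> C \<Longrightarrow> y \<in> C \<Longrightarrow> \<langle>x \<ominus> y, x \<ominus> y\<rangle> = 0 \<Longrightarrow> x = y"
  by (rule hs_eq_if_diff_eq_zero) (simp_all add: hs_inner_self_eq_zero)

lemma hs_scale_one: "x \<in> C \<Longrightarrow> 1 \<cdot> x = x"
  and hs_scale_scale: "x \<in> C \<Longrightarrow> c \<cdot> (d \<cdot> x) = (c * d) \<cdot> x"
  and hs_scale_add_left: "x \<in> C \<Longrightarrow> (c + d) \<cdot> x = c \<cdot> x \<oplus> d \<cdot> x"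
  and hs_scale_add_right: "x \<in> C \<Longrightarrow> y \<in> C \<Longrightarrow> c \<cdot> (x \<oplus> y) = c \<cdot> x \<oplus> c \<cdot> y"
  and hs_add_neg: "x \<in> C \<Longrightarrow> x \<oplus> (-1) \<cdot> x = \<zero>"
  and hs_scale_zero_left: "x \<in> C \<Longrightarrow> 0 \<cdot> x = \<zero>"
  by (rule hs_eqI_inner_diff; simp add: algebra_simps)+

lemma hs_norm_nonneg [simp]: "x \<in> C \<Longrightarrow> 0 \<le> \<parallel>x\<parallel>"
  unfolding hs_norm_def by (simp add: hs_inner_self_nonneg)

lemma power2_hs_norm: "x \<in> C \<Longrightarrow> \<parallel>x\<parallel>^2 = Re \<langle>x,x\<rangle>"
  unfolding hs_norm_def by (simp add: hs_inner_self_nonneg)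

lemma hs_norm_zero [simp]: "\<parallel>\<zero>\<parallel> = 0"
  unfolding hs_norm_def by simp

lemma hs_norm_eq_zero_imp: "x \<in> C \<Longrightarrow> \<parallel>x\<parallel> = 0 \<Longrightarrow> x = \<zero>"
  using power2_hs_norm[of x] hs_inner_self_real[of x] hs_inner_self_eq_zero[of x] by simp

lemma hs_Cauchy_Schwarz:
  assumes x: "x \<in> C" and y: "y \<in> C"
  shows "cmod \<langle>y,x\<rangle> \<le> \<parallel>x\<parallel> * \<parallel>y\<parallel>"
proof -
  define r where "r = Re \<langle>y,y\<rangle>"
  define b where "b = \<langle>y,x\<rangle>"
  have r0: "r \<ge> 0" unfolding r_def using hs_inner_self_nonneg[OF y] .
  have xy: "\<langle>x,y\<rangle> = cnj b" unfolding b_def using hs_inner_commute[OF y x] .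
  have yy: "\<langle>y,y\<rangle> = complex_of_real r" unfolding r_def using hs_inner_self_real[OF y] .
  have xx: "\<langle>x,x\<rangle> = complex_of_real (Re \<langle>x,x\<rangle>)" using hs_inner_self_real[OF x] .
  define v where "v = complex_of_real r \<cdot> x \<oplus> (-b) \<cdot> y"
  have "\<langle>v,v\<rangle> = complex_of_real r * complex_of_real r * \<langle>x,x\<rangle> + complex_of_real r * (-b) * \<langle>x,y\<rangle>
      + cnj (-b) * complex_of_real r * \<langle>y,x\<rangle> + cnj (-b) * (-b) * \<langle>y,y\<rangle>"
    unfolding v_def using x y by (simp add: algebra_simps)
  also have "\<dots> = complex_of_real (r * r * Re \<langle>x,x\<rangle> - r * (cmod b)^2)"
    using xy yy xx unfolding b_def[symmetric]
    by (simp add: algebra_simps complex_norm_square[symmetric] mult.commute[of b "cnj b"])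
  finally have "Re \<langle>v,v\<rangle> = r * r * Re \<langle>x,x\<rangle> - r * (cmod b)^2" by simp
  then have "r * (cmod b)^2 \<le> r * (r * Re \<langle>x,x\<rangle>)"
    using hs_inner_self_nonneg[of v] x y unfolding v_def by (simp add: algebra_simps)
  show ?thesis
  proof (cases "r = 0")
    case True
    then have "y = \<zero>" using hs_inner_self_eq_zero[OF y] yy by simp
    then show ?thesis using x unfolding b_def by simp
  next
    case False
    then have "(cmod b)^2 \<le> r * Re \<langle>x,x\<rangle>" using \<open>r * (cmod b)^2 \<le> _\<close> r0 by simp
    also have "\<dots> = (\<parallel>x\<parallel> * \<parallel>y\<parallel>)^2"
      using power2_hs_norm[OF x] power2_hs_norm[OF y] r_def by (simp add: power_mult_distrib)
    finally show ?thesis unfolding b_def by (rule power2_le_imp_le) (simp add: x y)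
  qed
qed

lemma hs_norm_triangle:
  assumes x: "x \<in> C" and y: "y \<in> C"
  shows "\<parallel>x \<oplus> y\<parallel> \<le> \<parallel>x\<parallel> + \<parallel>y\<parallel>"
proof -
  have "Re \<langle>x,y\<rangle> \<le> \<parallel>x\<parallel> * \<parallel>y\<parallel>" "Re \<langle>y,x\<rangle> \<le> \<parallel>x\<parallel> * \<parallel>y\<parallel>"
    using hs_Cauchy_Schwarz[OF y x] hs_Cauchy_Schwarz[OF x y]
      complex_Re_le_cmod[of "\<langle>x,y\<rangle>"] complex_Re_le_cmod[of "\<langle>y,x\<rangle>"] by (simp_all add: mult.commute)
  then have "\<parallel>x \<oplus> y\<parallel>^2 \<le> (\<parallel>x\<parallel> + \<parallel>y\<parallel>)^2"
    using power2_hs_norm[of "x \<oplus> y"] power2_hs_norm[OF x] power2_hs_norm[OF y] x y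
    by (simp add: power2_sum)
  then show ?thesis by (rule power2_le_imp_le) (simp add: x y)
qed

lemma hs_norm_scale: "x \<in> C \<Longrightarrow> \<parallel>c \<cdot> x\<parallel> = cmod c * \<parallel>x\<parallel>"
proof -
  assume x: "x \<in> C"
  have "\<langle>c \<cdot> x, c \<cdot> x\<rangle> = complex_of_real ((cmod c)^2) * \<langle>x,x\<rangle>"
    using x complex_norm_square[of c] by (simp add: algebra_simps)
  then have "\<parallel>c \<cdot> x\<parallel>^2 = Re (complex_of_real ((cmod c)^2) * \<langle>x,x\<rangle>)"
    using power2_hs_norm[of "c \<cdot> x"] x by (simp only: hs_scale_closed)
  also have "\<dots> = (cmod c * \<parallel>x\<parallel>)^2" using power2_hs_norm[OF x] by (simp add: power_mult_distrib)
  finally show ?thesis by (rule power2_eq_imp_eq) (simp_all add: x)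
qed

lemma hs_diff_self [simp]: "x \<in> C \<Longrightarrow> x \<ominus> x = \<zero>"
  by (rule hs_inner_self_eq_zero) simp_all

lemma hs_diff_zero [simp]: "x \<in> C \<Longrightarrow> x \<ominus> \<zero> = x"
  by (rule hs_eqI_inner_diff) simp_all

lemma hs_norm_diff_commute: "x \<in> C \<Longrightarrow> y \<in> C \<Longrightarrow> \<parallel>y \<ominus> x\<parallel> = \<parallel>x \<ominus> y\<parallel>"
proof -
  assume "x \<in> C" "y \<in> C"
  then have "y \<ominus> x = (-1) \<cdot> (x \<ominus> y)" by (intro hs_eqI_inner_diff) (simp_all add: algebra_simps)
  then show ?thesis using \<open>x \<in> C\<close> \<open>y \<in> C\<close> hs_norm_scale[of "x \<ominus> y" "-1"] by simp
qed

lemma hs_norm_diff_triangle: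
  assumes "x \<in> C" "y \<in> C" "w \<in> C"
  shows "\<parallel>x \<ominus> w\<parallel> \<le> \<parallel>x \<ominus> y\<parallel> + \<parallel>y \<ominus> w\<parallel>"
proof -
  have "x \<ominus> w = (x \<ominus> y) \<oplus> (y \<ominus> w)"
    by (rule hs_eqI_inner_diff) (use assms in \<open>simp_all add: algebra_simps\<close>)
  then show ?thesis using hs_norm_triangle[of "x \<ominus> y" "y \<ominus> w"] assms by simp
qed

lemma parallelogram_law:
  assumes "y \<in> C" "a \<in> C" "b \<in> C"
  shows "\<parallel>a \<ominus> b\<parallel>^2 = 2 * \<parallel>y \<ominus> a\<parallel>^2 + 2 * \<parallel>y \<ominus> b\<parallel>^2 - 4 * \<parallel>y \<ominus> (1/2) \<cdot> (a \<oplus> b)\<parallel>^2"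
proof -
  have "\<langle>a \<ominus> b, a \<ominus> b\<rangle> = 2 * \<langle>y \<ominus> a, y \<ominus> a\<rangle> + 2 * \<langle>y \<ominus> b, y \<ominus> b\<rangle>
      - 4 * \<langle>y \<ominus> (1/2) \<cdot> (a \<oplus> b), y \<ominus> (1/2) \<cdot> (a \<oplus> b)\<rangle>"
    using assms by (simp add: algebra_simps)
  then have "Re \<langle>a \<ominus> b, a \<ominus> b\<rangle> = 2 * Re \<langle>y \<ominus> a, y \<ominus> a\<rangle> + 2 * Re \<langle>y \<ominus> b, y \<ominus> b\<rangle>
      - 4 * Re \<langle>y \<ominus> (1/2) \<cdot> (a \<oplus> b), y \<ominus> (1/2) \<cdot> (a \<oplus> b)\<rangle>"
    by simp
  then show ?thesis using assms by (simp only: power2_hs_norm hs_sub_closed hs_add_closed hs_scale_closed)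
qed

lemma hs_tendsto_in_carrier: "hs_tendsto H s l \<Longrightarrow> l \<in> C"
  unfolding hs_tendsto_def by simp

lemma hs_tendsto_const: "l \<in> C \<Longrightarrow> hs_tendsto H (\<lambda>n. l) l"
  unfolding hs_tendsto_def by simp

lemma hs_tendsto_unique:
  assumes s: "\<And>n. s n \<in> C" and "hs_tendsto H s l" "hs_tendsto H s l'"
  shows "l = l'"
proof -
  have l: "l \<in> C" "l' \<in> C" using assms hs_tendsto_in_carrier by auto
  have "(\<lambda>n. \<parallel>s n \<ominus> l\<parallel> + \<parallel>s n \<ominus> l'\<parallel>) \<longlonglongrightarrow> 0 + 0"
    using assms unfolding hs_tendsto_def by (intro tendsto_add) auto
  moreover have "\<And>n. \<parallel>l \<ominus> l'\<parallel> \<le> \<parallel>s n \<ominus> l\<parallel> + \<parallel>s n \<ominus> l'\<parallel>"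
    using hs_norm_diff_triangle[of l "s _" l'] hs_norm_diff_commute[of l "s _"] s l by simp
  ultimately have "\<parallel>l \<ominus> l'\<parallel> \<le> 0" by (intro LIMSEQ_le_const) auto
  then have "l \<ominus> l' = \<zero>"
    using l hs_norm_nonneg[of "l \<ominus> l'"] by (intro hs_norm_eq_zero_imp) (simp_all add: antisym)
  then show ?thesis using hs_eq_if_diff_eq_zero l by simp
qed

lemma hs_lim_eqI: "(\<And>n. s n \<in> C) \<Longrightarrow> hs_tendsto H s l \<Longrightarrow> hs_lim H s = l"
  unfolding hs_lim_def by (rule the_equality) (auto intro: hs_tendsto_unique)

lemma hs_tendsto_hs_lim: "(\<And>n. s n \<in> C) \<Longrightarrow> hs_cauchy H s \<Longrightarrow> hs_tendsto H s (hs_lim H s)"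
  using hs_complete hs_lim_eqI by metis

lemma hs_tendsto_asymp:
  assumes "hs_tendsto H s l" "(\<lambda>n. \<parallel>s n \<ominus> t n\<parallel>) \<longlonglongrightarrow> 0" "\<And>n. s n \<in> C" "\<And>n. t n \<in> C"
  shows "hs_tendsto H t l"
proof -
  have l: "l \<in> C" using assms hs_tendsto_in_carrier by auto
  have "(\<lambda>n. \<parallel>s n \<ominus> t n\<parallel> + \<parallel>s n \<ominus> l\<parallel>) \<longlonglongrightarrow> 0"
    using assms unfolding hs_tendsto_def by (intro tendsto_add_zero) auto
  then have "(\<lambda>n. \<parallel>t n \<ominus> l\<parallel>) \<longlonglongrightarrow> 0"
    by (rule LIMSEQ_zero_squeeze[rotated 2])
      (use hs_norm_diff_triangle[of "t _" "s _" l] hs_norm_diff_commute[of "t _" "s _"] l assms(3,4) in auto)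
  then show ?thesis using l unfolding hs_tendsto_def by simp
qed

lemma hs_tendsto_imp_cauchy:
  assumes lim: "hs_tendsto H s l" and s: "\<And>n. s n \<in> C"
  shows "hs_cauchy H s"
  unfolding hs_cauchy_def
proof (intro allI impI)
  fix e :: real
  assume "e > 0"
  have l: "l \<in> C" using lim hs_tendsto_in_carrier by auto
  have "(\<lambda>n. \<parallel>s n \<ominus> l\<parallel>) \<longlonglongrightarrow> 0" using lim unfolding hs_tendsto_def by simp
  then obtain N where N: "\<And>n. n \<ge> N \<Longrightarrow> \<parallel>s n \<ominus> l\<parallel> < e/2"
    using order_tendstoD(2)[of _ 0 sequentially "e/2"] \<open>e > 0\<close> unfolding eventually_sequentially by auto
  show "\<exists>N. \<forall>m\<ge>N. \<forall>n\<ge>N. \<parallel>s m \<ominus> s n\<parallel> < e"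
  proof (intro exI allI impI)
    fix m n
    assume "m \<ge> N" "n \<ge> N"
    then show "\<parallel>s m \<ominus> s n\<parallel> < e"
      using N[of m] N[of n] hs_norm_diff_triangle[of "s m" l "s n"] hs_norm_diff_commute[of l "s n"] l s
      by fastforce
  qed
qed

lemma hs_tendsto_inner:
  assumes s: "hs_tendsto H s l" "\<And>n. s n \<in> C" and t: "hs_tendsto H t m" "\<And>n. t n \<in> C"
  shows "(\<lambda>n. \<langle>s n, t n\<rangle>) \<longlonglongrightarrow> \<langle>l, m\<rangle>"
proof -
  have l: "l \<in> C" "m \<in> C" using s t hs_tendsto_in_carrier by auto
  have ds: "(\<lambda>n. \<parallel>s n \<ominus> l\<parallel>) \<longlonglongrightarrow> 0" and dt: "(\<lambda>n. \<parallel>t n \<ominus> m\<parallel>) \<longlonglongrightarrow> 0"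
    using s t unfolding hs_tendsto_def by auto
  have bound: "cmod (\<langle>s n, t n\<rangle> - \<langle>l, m\<rangle>) \<le> \<parallel>s n \<ominus> l\<parallel> * (\<parallel>t n \<ominus> m\<parallel> + \<parallel>m\<parallel>) + \<parallel>l\<parallel> * \<parallel>t n \<ominus> m\<parallel>"
    for n
  proof -
    have "\<langle>s n, t n\<rangle> - \<langle>l, m\<rangle> = \<langle>s n \<ominus> l, t n\<rangle> + \<langle>l, t n \<ominus> m\<rangle>" using s t l by simp
    moreover have "cmod \<langle>s n \<ominus> l, t n\<rangle> \<le> \<parallel>t n\<parallel> * \<parallel>s n \<ominus> l\<parallel>"
      using hs_Cauchy_Schwarz[of "t n" "s n \<ominus> l"] s t l by simp
    moreover have "cmod \<langle>l, t n \<ominus> m\<rangle> \<le> \<parallel>l\<parallel> * \<parallel>t n \<ominus> m\<parallel>"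
      using hs_Cauchy_Schwarz[of "t n \<ominus> m" l] t l by (simp add: mult.commute)
    moreover have "\<parallel>t n\<parallel> * \<parallel>s n \<ominus> l\<parallel> \<le> (\<parallel>t n \<ominus> m\<parallel> + \<parallel>m\<parallel>) * \<parallel>s n \<ominus> l\<parallel>"
      using hs_norm_diff_triangle[of "t n" m \<zero>] s t l by (intro mult_right_mono) auto
    ultimately show ?thesis
      using norm_triangle_ineq[of "\<langle>s n \<ominus> l, t n\<rangle>" "\<langle>l, t n \<ominus> m\<rangle>"] by (simp add: mult.commute)
  qed
  have "(\<lambda>n. \<parallel>s n \<ominus> l\<parallel> * (\<parallel>t n \<ominus> m\<parallel> + \<parallel>m\<parallel>) + \<parallel>l\<parallel> * \<parallel>t n \<ominus> m\<parallel>) \<longlonglongrightarrow> 0 * (0 + \<parallel>m\<parallel>) + \<parallel>l\<parallel> * 0"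
    by (intro tendsto_intros ds dt)
  then have "(\<lambda>n. cmod (\<langle>s n, t n\<rangle> - \<langle>l, m\<rangle>)) \<longlonglongrightarrow> 0"
    by (intro LIMSEQ_zero_squeeze[OF norm_ge_zero bound]) simp
  then show ?thesis by (simp add: tendsto_norm_zero_iff LIM_zero_iff)
qed

lemma hs_tendsto_add:
  assumes s: "hs_tendsto H s l" "\<And>n. s n \<in> C" and t: "hs_tendsto H t m" "\<And>n. t n \<in> C"
  shows "hs_tendsto H (\<lambda>n. s n \<oplus> t n) (l \<oplus> m)"
proof -
  have l: "l \<in> C" "m \<in> C" using s t hs_tendsto_in_carrier by auto
  have bound: "\<parallel>(s n \<oplus> t n) \<ominus> (l \<oplus> m)\<parallel> \<le> \<parallel>s n \<ominus> l\<parallel> + \<parallel>t n \<ominus> m\<parallel>" for n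
  proof -
    have "(s n \<oplus> t n) \<ominus> (l \<oplus> m) = (s n \<ominus> l) \<oplus> (t n \<ominus> m)"
      by (rule hs_eqI_inner_diff) (use s t l in \<open>simp_all add: algebra_simps\<close>)
    then show ?thesis using hs_norm_triangle[of "s n \<ominus> l" "t n \<ominus> m"] s t l by simp
  qed
  have "(\<lambda>n. \<parallel>s n \<ominus> l\<parallel> + \<parallel>t n \<ominus> m\<parallel>) \<longlonglongrightarrow> 0"
    using s(1) t(1) unfolding hs_tendsto_def by (intro tendsto_add_zero) auto
  then have "(\<lambda>n. \<parallel>(s n \<oplus> t n) \<ominus> (l \<oplus> m)\<parallel>) \<longlonglongrightarrow> 0"
    using LIMSEQ_zero_squeeze[OF _ bound] s t l by simp
  then show ?thesis unfolding hs_tendsto_def using l by simp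
qed

lemma hs_tendsto_scale:
  assumes s: "hs_tendsto H s l" "\<And>n. s n \<in> C"
  shows "hs_tendsto H (\<lambda>n. c \<cdot> s n) (c \<cdot> l)"
proof -
  have l: "l \<in> C" using s hs_tendsto_in_carrier by auto
  have "c \<cdot> s n \<ominus> c \<cdot> l = c \<cdot> (s n \<ominus> l)" for n
    by (rule hs_eqI_inner_diff) (use s l in \<open>simp_all add: algebra_simps\<close>)
  then have "\<parallel>c \<cdot> s n \<ominus> c \<cdot> l\<parallel> = cmod c * \<parallel>s n \<ominus> l\<parallel>" for n
    using hs_norm_scale[of "s n \<ominus> l" c] s l by simp
  moreover have "(\<lambda>n. cmod c * \<parallel>s n \<ominus> l\<parallel>) \<longlonglongrightarrow> cmod c * 0"
    using s unfolding hs_tendsto_def by (intro tendsto_intros) auto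
  ultimately show ?thesis unfolding hs_tendsto_def using l by simp
qed

subsection \<open>Orthogonal projection\<close>

definition closed_subspace :: "'h set \<Rightarrow> bool" where
  "closed_subspace K \<longleftrightarrow> K \<subseteq> C \<and> \<zero> \<in> K \<and> (\<forall>x\<in>K. \<forall>y\<in>K. x \<oplus> y \<in> K) \<and> (\<forall>c. \<forall>x\<in>K. c \<cdot> x \<in> K) \<and>
     (\<forall>s l. (\<forall>n. s n \<in> K) \<and> hs_tendsto H s l \<longrightarrow> l \<in> K)"

lemma minimizing_sequence_cauchy:
  assumes y: "y \<in> C" and w: "\<And>n. w n \<in> C" and "0 \<le> d"
    and midpoint: "\<And>m n. d \<le> \<parallel>y \<ominus> (1/2) \<cdot> (w m \<oplus> w n)\<parallel>"
    and close: "\<And>n. \<parallel>y \<ominus> w n\<parallel> \<le> d + inverse (real (Suc n))"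
  shows "hs_cauchy H w"
  unfolding hs_cauchy_def
proof (intro allI impI)
  fix e :: real
  assume "e > 0"
  obtain N :: nat where N: "(8 * d + 4) / e^2 < real N" using reals_Archimedean2 by blast
  have "8 * d + 4 < e^2 * real N" using N \<open>e > 0\<close> by (simp add: pos_divide_less_eq mult.commute)
  also have "\<dots> \<le> e^2 * real (Suc N)" by (intro mult_left_mono) simp_all
  finally have "(8 * d + 4) * inverse (real (Suc N)) < e^2" by (simp add: field_simps)
  show "\<exists>N. \<forall>m\<ge>N. \<forall>n\<ge>N. \<parallel>w m \<ominus> w n\<parallel> < e"
  proof (intro exI allI impI)
    fix m n
    assume "m \<ge> N" "n \<ge> N"
    define em where "em = inverse (real (Suc m))"
    define en where "en = inverse (real (Suc n))"
    define eN where "eN = inverse (real (Suc N))"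
    have eps: "0 \<le> em" "em \<le> eN" "0 \<le> en" "en \<le> eN" "eN \<le> 1"
      unfolding em_def en_def eN_def using \<open>m \<ge> N\<close> \<open>n \<ge> N\<close> by (auto simp: field_simps)
    have "\<parallel>y \<ominus> w m\<parallel>^2 \<le> (d + em)^2" "\<parallel>y \<ominus> w n\<parallel>^2 \<le> (d + en)^2" "d^2 \<le> \<parallel>y \<ominus> (1/2) \<cdot> (w m \<oplus> w n)\<parallel>^2"
      using close[of m] close[of n] midpoint[of m n] \<open>0 \<le> d\<close> y w unfolding em_def en_def eN_def
      by (auto intro!: power_mono)
    then have "\<parallel>w m \<ominus> w n\<parallel>^2 \<le> 2 * (d + em)^2 + 2 * (d + en)^2 - 4 * d^2"
      using parallelogram_law[OF y w[of m] w[of n]] by linarith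
    also have "\<dots> = 4 * d * (em + en) + 2 * em^2 + 2 * en^2" by (simp add: power2_eq_square algebra_simps)
    also have "\<dots> \<le> (8 * d + 4) * eN"
    proof -
      have "em^2 \<le> eN" "en^2 \<le> eN" using eps by (simp_all add: power2_eq_square mult_le_one order_trans[OF mult_right_le_one_le])
      moreover have "4 * d * (em + en) \<le> 4 * d * (2 * eN)" using eps \<open>0 \<le> d\<close> by (intro mult_left_mono) auto
      ultimately show ?thesis by (simp add: algebra_simps)
    qed
    also have "\<dots> < e^2" using \<open>(8 * d + 4) * _ < e^2\<close> unfolding em_def en_def eN_def by simp
    finally show "\<parallel>w m \<ominus> w n\<parallel> < e" using \<open>e > 0\<close> by (simp add: power_less_imp_less_base)
  qed
qed

lemma nearest_point_exists:
  assumes K: "closed_subspace K" and y: "y \<in> C"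
  shows "\<exists>k\<in>K. \<forall>v\<in>K. \<parallel>y \<ominus> k\<parallel> \<le> \<parallel>y \<ominus> v\<parallel>"
proof -
  have KC: "K \<subseteq> C" and "\<zero> \<in> K" and add: "\<And>x y. x \<in> K \<Longrightarrow> y \<in> K \<Longrightarrow> x \<oplus> y \<in> K"
    and scale: "\<And>c x. x \<in> K \<Longrightarrow> c \<cdot> x \<in> K"
    and closed: "\<And>s l. (\<And>n. s n \<in> K) \<Longrightarrow> hs_tendsto H s l \<Longrightarrow> l \<in> K"
    using K unfolding closed_subspace_def by blast+
  define D where "D = (\<lambda>v. \<parallel>y \<ominus> v\<parallel>) ` K"
  define d where "d = Inf D"
  have "D \<noteq> {}" "bdd_below D"
    unfolding D_def bdd_below_def using \<open>\<zero> \<in> K\<close> KC y by (auto intro!: exI[of _ 0])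
  have d_le: "\<And>v. v \<in> K \<Longrightarrow> d \<le> \<parallel>y \<ominus> v\<parallel>"
    unfolding d_def using \<open>bdd_below D\<close> by (auto simp: D_def intro: cInf_lower)
  have "0 \<le> d"
    unfolding d_def by (rule cInf_greatest[OF \<open>D \<noteq> {}\<close>]) (use KC y in \<open>auto simp: D_def\<close>)
  have "\<forall>n. \<exists>v\<in>K. \<parallel>y \<ominus> v\<parallel> < d + inverse (real (Suc n))"
    using cInf_less_iff[OF \<open>D \<noteq> {}\<close> \<open>bdd_below D\<close>, of "d + inverse (real (Suc _))"]
    unfolding d_def D_def by auto
  then obtain w where w: "\<And>n. w n \<in> K" and close: "\<And>n. \<parallel>y \<ominus> w n\<parallel> < d + inverse (real (Suc n))"
    by metis
  have wC: "\<And>n. w n \<in> C" using w KC by auto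
  have "hs_cauchy H w"
    using d_le[OF scale[OF add[OF w w]]] close
    by (intro minimizing_sequence_cauchy[OF y wC \<open>0 \<le> d\<close>]) (auto intro: less_imp_le)
  then obtain k where k: "hs_tendsto H w k" using hs_complete wC by blast
  have "k \<in> K" using closed[OF w k] .
  have "\<parallel>y \<ominus> k\<parallel> \<le> d"
  proof (rule LIMSEQ_le_const)
    show "(\<lambda>n. d + inverse (real (Suc n)) + \<parallel>w n \<ominus> k\<parallel>) \<longlonglongrightarrow> d"
      using tendsto_add[OF LIMSEQ_inverse_real_of_nat_add[of d], of "\<lambda>n. \<parallel>w n \<ominus> k\<parallel>" 0] k
      unfolding hs_tendsto_def by simp
    show "\<exists>N. \<forall>n\<ge>N. \<parallel>y \<ominus> k\<parallel> \<le> d + inverse (real (Suc n)) + \<parallel>w n \<ominus> k\<parallel>"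
    proof (intro exI allI impI)
      fix n
      show "\<parallel>y \<ominus> k\<parallel> \<le> d + inverse (real (Suc n)) + \<parallel>w n \<ominus> k\<parallel>"
        using hs_norm_diff_triangle[OF y wC hs_tendsto_in_carrier[OF k], of n] close[of n] by linarith
    qed
  qed
  then show ?thesis using \<open>k \<in> K\<close> d_le by force
qed

lemma hs_inner_eq_zero_if_minimal:
  assumes uC: "u \<in> C" and vC: "v \<in> C" and minimal: "\<And>c. \<parallel>u\<parallel> \<le> \<parallel>u \<ominus> c \<cdot> v\<parallel>"
  shows "\<langle>v, u\<rangle> = 0"
proof -
  define b where "b = \<langle>v, u\<rangle>"
  define W where "W = Re \<langle>v,v\<rangle>"
  have "0 \<le> W" unfolding W_def using hs_inner_self_nonneg[OF vC] .
  have uv: "\<langle>u,v\<rangle> = cnj b" and vv: "\<langle>v,v\<rangle> = complex_of_real W"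
    unfolding b_def W_def using hs_inner_commute[OF vC uC] hs_inner_self_real[OF vC] by simp_all
  have nb: "cmod b * cmod b = Re b * Re b + Im b * Im b"
    using cmod_power2[of b] by (simp add: power2_eq_square)
  have key: "2 * t * (cmod b)^2 \<le> t^2 * (cmod b)^2 * W" if "t > 0" for t :: real
  proof -
    define c where "c = complex_of_real t * b"
    have "\<parallel>u\<parallel>^2 \<le> \<parallel>u \<ominus> c \<cdot> v\<parallel>^2" using minimal uC by (intro power_mono) auto
    moreover have "\<langle>u \<ominus> c \<cdot> v, u \<ominus> c \<cdot> v\<rangle> = \<langle>u,u\<rangle> - c * \<langle>u,v\<rangle> - cnj c * \<langle>v,u\<rangle> + cnj c * c * \<langle>v,v\<rangle>"
      using uC vC by (simp add: algebra_simps)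
    moreover have "c * \<langle>u,v\<rangle> = complex_of_real (t * (cmod b)^2)"
      unfolding uv c_def by (simp add: complex_eq_iff nb algebra_simps power2_eq_square)
    moreover have "cnj c * \<langle>v,u\<rangle> = complex_of_real (t * (cmod b)^2)"
      unfolding b_def[symmetric] c_def by (simp add: complex_eq_iff nb algebra_simps power2_eq_square)
    moreover have "cnj c * c * \<langle>v,v\<rangle> = complex_of_real (t^2 * (cmod b)^2 * W)"
      unfolding vv c_def by (simp add: complex_eq_iff nb algebra_simps power2_eq_square)
    ultimately have "\<parallel>u\<parallel>^2 \<le> Re \<langle>u,u\<rangle> - 2 * (t * (cmod b)^2) + t^2 * (cmod b)^2 * W"
      using power2_hs_norm[of "u \<ominus> c \<cdot> v"] uC vC by simp
    then show ?thesis using power2_hs_norm[OF uC] by simp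
  qed
  define t where "t = 1 / (W + 1)"
  have "t > 0" "t * W \<le> 1" unfolding t_def using \<open>0 \<le> W\<close> by (simp_all add: field_simps)
  then have "2 * (cmod b)^2 \<le> (t * W) * (cmod b)^2"
    using key[OF \<open>t > 0\<close>] by (simp add: power2_eq_square algebra_simps)
  also have "\<dots> \<le> (cmod b)^2" using mult_right_mono[OF \<open>t * W \<le> 1\<close>, of "(cmod b)^2"] by simp
  finally show ?thesis unfolding b_def by simp
qed

lemma nearest_point_orthogonal:
  assumes K: "closed_subspace K" and y: "y \<in> C" and "k \<in> K"
    and nearest: "\<And>v. v \<in> K \<Longrightarrow> \<parallel>y \<ominus> k\<parallel> \<le> \<parallel>y \<ominus> v\<parallel>" and "v \<in> K"
  shows "\<langle>v, y \<ominus> k\<rangle> = 0"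
proof (rule hs_inner_eq_zero_if_minimal)
  have KC: "K \<subseteq> C" and add: "\<And>x y. x \<in> K \<Longrightarrow> y \<in> K \<Longrightarrow> x \<oplus> y \<in> K"
    and scale: "\<And>c x. x \<in> K \<Longrightarrow> c \<cdot> x \<in> K"
    using K unfolding closed_subspace_def by blast+
  show kC: "y \<ominus> k \<in> C" and vC: "v \<in> C" using \<open>k \<in> K\<close> \<open>v \<in> K\<close> KC y by auto
  fix c
  have "y \<ominus> (k \<oplus> c \<cdot> v) = y \<ominus> k \<ominus> c \<cdot> v"
    by (rule hs_eqI_inner_diff) (use y \<open>k \<in> K\<close> vC KC in \<open>auto simp: algebra_simps\<close>)
  then show "\<parallel>y \<ominus> k\<parallel> \<le> \<parallel>y \<ominus> k \<ominus> c \<cdot> v\<parallel>"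
    using nearest[OF add[OF \<open>k \<in> K\<close> scale[OF \<open>v \<in> K\<close>, of c]]] by simp
qed

lemma orthogonal_projection_exists:
  assumes "closed_subspace K" and "y \<in> C"
  shows "\<exists>k\<in>K. \<forall>v\<in>K. \<langle>v, y \<ominus> k\<rangle> = 0"
  using nearest_point_exists[OF assms] nearest_point_orthogonal[OF assms] by blast

end

lemma hs_bounded_linear_tendsto:
  assumes "hilbert H" "hilbert K" and T: "hs_bounded_linear H K T"
    and s: "\<And>n. s n \<in> hs_carrier H" and lim: "hs_tendsto H s l"
  shows "hs_tendsto K (\<lambda>n. T (s n)) (T l)"
proof -
  interpret H: hilbert H by fact
  interpret K: hilbert K by fact
  have l: "l \<in> hs_carrier H" using lim H.hs_tendsto_in_carrier by blast
  have T_closed: "\<And>x. x \<in> hs_carrier H \<Longrightarrow> T x \<in> hs_carrier K"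
    and T_diff: "\<And>x y. x \<in> hs_carrier H \<Longrightarrow> y \<in> hs_carrier H \<Longrightarrow> T (hs_sub H x y) = hs_sub K (T x) (T y)"
    using T unfolding hs_bounded_linear_def hs_sub_def by simp_all
  obtain B where B: "\<And>x. x \<in> hs_carrier H \<Longrightarrow> hs_norm K (T x) \<le> B * hs_norm H x"
    using T unfolding hs_bounded_linear_def by blast
  have "(\<lambda>n. B * hs_norm H (hs_sub H (s n) l)) \<longlonglongrightarrow> 0"
    using lim unfolding hs_tendsto_def by (auto intro: tendsto_mult_right_zero)
  then have "(\<lambda>n. hs_norm K (T (hs_sub H (s n) l))) \<longlonglongrightarrow> 0"
    by (rule LIMSEQ_zero_squeeze[rotated 2]) (simp_all add: B T_closed s l)
  then have "(\<lambda>n. hs_norm K (hs_sub K (T (s n)) (T l))) \<longlonglongrightarrow> 0"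
    by (simp add: T_diff s l)
  then show ?thesis unfolding hs_tendsto_def using T_closed[OF l] by simp
qed

section \<open>The GNS space of a state with a Gram realisation\<close>

locale gns_embedding = hilbert H for H :: "'h hilb" +
  fixes A :: "'a cstar_alg" and \<omega> :: "'a \<Rightarrow> complex" and \<psi> :: "'a \<Rightarrow> 'h"
  assumes psi_closed [simp]: "\<psi> a \<in> C"
    and psi_add: "\<psi> (ca_add A a b) = \<psi> a \<oplus> \<psi> b"
    and psi_scale: "\<psi> (ca_scale A c a) = c \<cdot> \<psi> a"
    and psi_zero: "\<psi> (ca_zero A) = \<zero>"
    and state_eq_inner: "\<omega> (ca_mul A (ca_star A a) b) = \<langle>\<psi> a, \<psi> b\<rangle>"
begin

abbreviation "G \<equiv> gns_space A \<omega>"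
abbreviation "GC \<equiv> hs_carrier G"

lemma psi_diff: "\<psi> (ca_sub A a b) = \<psi> a \<ominus> \<psi> b"
  unfolding ca_sub_def hs_sub_def by (simp add: psi_add psi_scale)

lemma gns_p_eq_norm: "gns_p A \<omega> a = \<parallel>\<psi> a\<parallel>"
  unfolding gns_p_def hs_norm_def state_eq_inner ..

lemma gns_cauchy_iff: "gns_cauchy A \<omega> x \<longleftrightarrow> hs_cauchy H (\<lambda>n. \<psi> (x n))"
  unfolding gns_cauchy_def hs_cauchy_def gns_p_eq_norm psi_diff ..

definition psi_lim :: "(nat \<Rightarrow> 'a) \<Rightarrow> 'h" where
  "psi_lim x = hs_lim H (\<lambda>n. \<psi> (x n))"

lemma tendsto_psi_lim: "gns_cauchy A \<omega> x \<Longrightarrow> hs_tendsto H (\<lambda>n. \<psi> (x n)) (psi_lim x)"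
  unfolding psi_lim_def gns_cauchy_iff by (rule hs_tendsto_hs_lim) simp_all

lemma psi_lim_eqI: "hs_tendsto H (\<lambda>n. \<psi> (x n)) l \<Longrightarrow> gns_cauchy A \<omega> x \<and> psi_lim x = l"
  using hs_tendsto_imp_cauchy hs_lim_eqI unfolding gns_cauchy_iff psi_lim_def by simp

lemma mem_gns_class_iff:
  assumes "gns_cauchy A \<omega> x"
  shows "y \<in> gns_class A \<omega> x \<longleftrightarrow> gns_cauchy A \<omega> y \<and> psi_lim y = psi_lim x"
proof -
  have "(\<lambda>n. \<parallel>\<psi> (x n) \<ominus> \<psi> (y n)\<parallel>) \<longlonglongrightarrow> 0 \<longleftrightarrow> hs_tendsto H (\<lambda>n. \<psi> (y n)) (psi_lim x)"
    if "gns_cauchy A \<omega> y"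
  proof
    assume "(\<lambda>n. \<parallel>\<psi> (x n) \<ominus> \<psi> (y n)\<parallel>) \<longlonglongrightarrow> 0"
    then show "hs_tendsto H (\<lambda>n. \<psi> (y n)) (psi_lim x)"
      using hs_tendsto_asymp[OF tendsto_psi_lim[OF assms]] by simp
  next
    assume lim_y: "hs_tendsto H (\<lambda>n. \<psi> (y n)) (psi_lim x)"
    have l: "psi_lim x \<in> C" using hs_tendsto_in_carrier[OF tendsto_psi_lim[OF assms]] .
    have "(\<lambda>n. \<parallel>\<psi> (x n) \<ominus> psi_lim x\<parallel> + \<parallel>\<psi> (y n) \<ominus> psi_lim x\<parallel>) \<longlonglongrightarrow> 0"
      using tendsto_psi_lim[OF assms] lim_y unfolding hs_tendsto_def by (auto intro: tendsto_add_zero)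
    then show "(\<lambda>n. \<parallel>\<psi> (x n) \<ominus> \<psi> (y n)\<parallel>) \<longlonglongrightarrow> 0"
      by (rule LIMSEQ_zero_squeeze[rotated 2])
        (use hs_norm_diff_triangle[OF psi_closed l psi_closed] hs_norm_diff_commute[OF psi_closed l] in auto)
  qed
  moreover have "hs_tendsto H (\<lambda>n. \<psi> (y n)) (psi_lim x) \<longleftrightarrow> psi_lim y = psi_lim x"
    if "gns_cauchy A \<omega> y"
    using psi_lim_eqI tendsto_psi_lim[OF that] by metis
  ultimately show ?thesis
    unfolding gns_class_def gns_p_eq_norm psi_diff mem_Collect_eq by blast
qed

lemma gns_class_eq_iff:
  assumes "gns_cauchy A \<omega> x" "gns_cauchy A \<omega> y"
  shows "gns_class A \<omega> x = gns_class A \<omega> y \<longleftrightarrow> psi_lim x = psi_lim y"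
proof
  assume "gns_class A \<omega> x = gns_class A \<omega> y"
  then have "x \<in> gns_class A \<omega> y" using mem_gns_class_iff[OF assms(1), of x] assms(1) by simp
  then show "psi_lim x = psi_lim y" using mem_gns_class_iff[OF assms(2)] by simp
next
  assume "psi_lim x = psi_lim y"
  then show "gns_class A \<omega> x = gns_class A \<omega> y"
    using mem_gns_class_iff[OF assms(1)] mem_gns_class_iff[OF assms(2)] by auto
qed

lemma gns_carrier_cases:
  assumes "X \<in> GC"
  obtains x where "gns_cauchy A \<omega> x" "X = gns_class A \<omega> x"
  using assms unfolding gns_space_def by auto

lemma gns_rep_mem: "X \<in> GC \<Longrightarrow> gns_rep X \<in> X"
  unfolding gns_rep_def by (metis gns_carrier_cases mem_gns_class_iff someI)

definition gns_embed :: "(nat \<Rightarrow> 'a) set \<Rightarrow> 'h" where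
  "gns_embed X = hs_lim H (\<lambda>n. \<psi> (gns_rep X n))"

lemma tendsto_gns_embed:
  assumes "X \<in> GC" "x \<in> X"
  shows "hs_tendsto H (\<lambda>n. \<psi> (x n)) (gns_embed X)"
proof -
  obtain y where y: "gns_cauchy A \<omega> y" "X = gns_class A \<omega> y" using assms(1) by (rule gns_carrier_cases)
  have "psi_lim (gns_rep X) = psi_lim y" "gns_cauchy A \<omega> x" "psi_lim x = psi_lim y"
    using gns_rep_mem[OF assms(1)] assms(2) y mem_gns_class_iff by auto
  then show ?thesis using tendsto_psi_lim unfolding gns_embed_def psi_lim_def by metis
qed

lemma gns_embed_closed [simp]: "X \<in> GC \<Longrightarrow> gns_embed X \<in> C"
  using tendsto_gns_embed gns_rep_mem hs_tendsto_in_carrier by blast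

lemma gns_class_in_carrier:
  assumes "hs_tendsto H (\<lambda>n. \<psi> (x n)) l"
  shows "gns_class A \<omega> x \<in> GC" and "gns_embed (gns_class A \<omega> x) = l"
proof -
  have x: "gns_cauchy A \<omega> x" "psi_lim x = l" using psi_lim_eqI[OF assms] by auto
  then show "gns_class A \<omega> x \<in> GC" unfolding gns_space_def by auto
  then show "gns_embed (gns_class A \<omega> x) = l"
    using tendsto_gns_embed[of _ x] hs_tendsto_unique[OF _ _ assms] mem_gns_class_iff x by simp
qed

lemma gns_embed_inj: "X \<in> GC \<Longrightarrow> Y \<in> GC \<Longrightarrow> gns_embed X = gns_embed Y \<Longrightarrow> X = Y"
  by (metis gns_carrier_cases gns_class_eq_iff gns_class_in_carrier(2) tendsto_psi_lim)

lemma tendsto_gns_rep: "X \<in> GC \<Longrightarrow> hs_tendsto H (\<lambda>n. \<psi> (gns_rep X n)) (gns_embed X)"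
  using tendsto_gns_embed gns_rep_mem by blast

lemma gns_add_closed: "X \<in> GC \<Longrightarrow> Y \<in> GC \<Longrightarrow> hs_add G X Y \<in> GC"
  and gns_embed_add: "X \<in> GC \<Longrightarrow> Y \<in> GC \<Longrightarrow> gns_embed (hs_add G X Y) = gns_embed X \<oplus> gns_embed Y"
proof -
  have lim: "hs_tendsto H (\<lambda>n. \<psi> (ca_add A (gns_rep X n) (gns_rep Y n))) (gns_embed X \<oplus> gns_embed Y)"
    if "X \<in> GC" "Y \<in> GC"
    unfolding psi_add by (rule hs_tendsto_add[OF tendsto_gns_rep _ tendsto_gns_rep]) (simp_all add: that)
  show "X \<in> GC \<Longrightarrow> Y \<in> GC \<Longrightarrow> hs_add G X Y \<in> GC"
    using gns_class_in_carrier(1)[OF lim] unfolding gns_space_def by simp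
  show "X \<in> GC \<Longrightarrow> Y \<in> GC \<Longrightarrow> gns_embed (hs_add G X Y) = gns_embed X \<oplus> gns_embed Y"
    using gns_class_in_carrier(2)[OF lim] unfolding gns_space_def by simp
qed

lemma gns_scale_closed: "X \<in> GC \<Longrightarrow> hs_scale G c X \<in> GC"
  and gns_embed_scale: "X \<in> GC \<Longrightarrow> gns_embed (hs_scale G c X) = c \<cdot> gns_embed X"
proof -
  have lim: "hs_tendsto H (\<lambda>n. \<psi> (ca_scale A c (gns_rep X n))) (c \<cdot> gns_embed X)" if "X \<in> GC"
    unfolding psi_scale by (rule hs_tendsto_scale[OF tendsto_gns_rep]) (simp_all add: that)
  show "X \<in> GC \<Longrightarrow> hs_scale G c X \<in> GC"
    using gns_class_in_carrier(1)[OF lim] unfolding gns_space_def by simp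
  show "X \<in> GC \<Longrightarrow> gns_embed (hs_scale G c X) = c \<cdot> gns_embed X"
    using gns_class_in_carrier(2)[OF lim] unfolding gns_space_def by simp
qed

lemma gns_zero_closed: "hs_zero G \<in> GC"
  and gns_embed_zero: "gns_embed (hs_zero G) = \<zero>"
  using gns_class_in_carrier[of "\<lambda>n. ca_zero A"] hs_tendsto_const[OF hs_zero_closed]
  unfolding gns_space_def psi_zero by simp_all

lemma gns_vec_closed: "gns_vec A \<omega> a \<in> GC"
  and gns_embed_gns_vec: "gns_embed (gns_vec A \<omega> a) = \<psi> a"
  using gns_class_in_carrier[OF hs_tendsto_const[OF psi_closed]] unfolding gns_vec_def by simp_all

lemma gns_diff_closed: "X \<in> GC \<Longrightarrow> Y \<in> GC \<Longrightarrow> hs_sub G X Y \<in> GC"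
  and gns_embed_diff: "X \<in> GC \<Longrightarrow> Y \<in> GC \<Longrightarrow> gns_embed (hs_sub G X Y) = gns_embed X \<ominus> gns_embed Y"
  unfolding hs_sub_def by (simp_all add: gns_add_closed gns_embed_add gns_scale_closed gns_embed_scale)

lemma gns_inner_eq:
  assumes "X \<in> GC" "Y \<in> GC"
  shows "hs_inner G X Y = \<langle>gns_embed X, gns_embed Y\<rangle>"
proof -
  have "hs_inner G X Y = lim (\<lambda>n. \<langle>\<psi> (gns_rep X n), \<psi> (gns_rep Y n)\<rangle>)"
    by (simp add: gns_space_def state_eq_inner)
  also have "\<dots> = \<langle>gns_embed X, gns_embed Y\<rangle>"
    using hs_tendsto_inner[OF tendsto_gns_rep _ tendsto_gns_rep] assms by (simp add: limI)
  finally show ?thesis .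
qed

lemma gns_norm_eq: "X \<in> GC \<Longrightarrow> hs_norm G X = \<parallel>gns_embed X\<parallel>"
  unfolding hs_norm_def by (simp add: gns_inner_eq)

lemmas gns_closed = gns_add_closed gns_scale_closed gns_zero_closed gns_diff_closed
lemmas gns_embed_simps = gns_embed_add gns_embed_scale gns_embed_zero gns_embed_diff gns_inner_eq

definition psi_closure :: "'h set" where
  "psi_closure = {u \<in> C. \<forall>e>0. \<exists>a. \<parallel>u \<ominus> \<psi> a\<parallel> < e}"

lemma psi_closure_closed:
  assumes s: "\<And>n. s n \<in> psi_closure" and lim: "hs_tendsto H s l"
  shows "l \<in> psi_closure"
  unfolding psi_closure_def
proof (intro CollectI conjI allI impI)
  show l: "l \<in> C" using hs_tendsto_in_carrier[OF lim] .
  have sC: "\<And>n. s n \<in> C" using s unfolding psi_closure_def by blast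
  fix e :: real
  assume "e > 0"
  have "(\<lambda>n. \<parallel>s n \<ominus> l\<parallel>) \<longlonglongrightarrow> 0" using lim unfolding hs_tendsto_def by simp
  then obtain N where N: "\<parallel>s N \<ominus> l\<parallel> < e/2"
    using order_tendstoD(2)[of _ 0 sequentially "e/2"] \<open>e > 0\<close> unfolding eventually_sequentially by auto
  obtain a where a: "\<parallel>s N \<ominus> \<psi> a\<parallel> < e/2"
    using s[of N] half_gt_zero[OF \<open>e > 0\<close>] unfolding psi_closure_def by blast
  have "\<parallel>l \<ominus> \<psi> a\<parallel> \<le> \<parallel>l \<ominus> s N\<parallel> + \<parallel>s N \<ominus> \<psi> a\<parallel>" by (rule hs_norm_diff_triangle[OF l sC psi_closed])
  then show "\<exists>a. \<parallel>l \<ominus> \<psi> a\<parallel> < e" using N a hs_norm_diff_commute[OF l sC[of N]] by (intro exI[of _ a]) linarith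
qed

lemma gns_embed_image: "gns_embed ` GC = psi_closure"
proof (intro equalityI subsetI)
  fix u
  assume "u \<in> gns_embed ` GC"
  then obtain X where X: "X \<in> GC" "u = gns_embed X" by blast
  have "\<psi> (gns_rep X n) \<in> psi_closure" for n
    unfolding psi_closure_def using hs_diff_self[of "\<psi> (gns_rep X n)"] by (auto intro!: exI[of _ "gns_rep X n"])
  then show "u \<in> psi_closure" using psi_closure_closed[OF _ tendsto_gns_rep[OF X(1)]] X(2) by simp
next
  fix u
  assume u: "u \<in> psi_closure"
  then have "\<forall>n. \<exists>a. \<parallel>u \<ominus> \<psi> a\<parallel> < inverse (real (Suc n))" unfolding psi_closure_def by simp
  then obtain x where x: "\<And>n. \<parallel>u \<ominus> \<psi> (x n)\<parallel> < inverse (real (Suc n))" by metis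
  have uC: "u \<in> C" using u unfolding psi_closure_def by simp
  have "(\<lambda>n. \<parallel>\<psi> (x n) \<ominus> u\<parallel>) \<longlonglongrightarrow> 0"
    by (rule LIMSEQ_zero_squeeze[OF _ _ LIMSEQ_inverse_real_of_nat])
      (use x hs_norm_diff_commute[OF uC psi_closed] uC in \<open>auto intro: less_imp_le\<close>)
  then have "hs_tendsto H (\<lambda>n. \<psi> (x n)) u" unfolding hs_tendsto_def using uC by simp
  then show "u \<in> gns_embed ` GC" using gns_class_in_carrier by (metis image_eqI)
qed

lemma closed_subspace_psi_closure: "closed_subspace psi_closure"
  unfolding closed_subspace_def
proof (intro conjI ballI allI impI)
  show "psi_closure \<subseteq> C" unfolding psi_closure_def by blast
  show "\<zero> \<in> psi_closure"
    using gns_embed_image gns_zero_closed gns_embed_zero by (metis image_eqI)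
  fix u v c
  assume "u \<in> psi_closure" "v \<in> psi_closure"
  then obtain X Y where "X \<in> GC" "Y \<in> GC" "u = gns_embed X" "v = gns_embed Y"
    unfolding gns_embed_image[symmetric] by blast
  then show "u \<oplus> v \<in> psi_closure" "c \<cdot> u \<in> psi_closure"
    unfolding gns_embed_image[symmetric]
    using gns_add_closed gns_embed_add gns_scale_closed gns_embed_scale by (metis image_eqI)+
next
  fix s l
  assume "(\<forall>n. s n \<in> psi_closure) \<and> hs_tendsto H s l"
  then show "l \<in> psi_closure" using psi_closure_closed by blast
qed

lemma gns_space_complete:
  assumes s: "\<And>n. s n \<in> GC" and "hs_cauchy G s"
  shows "\<exists>Y. hs_tendsto G s Y"
proof -
  have "hs_cauchy H (\<lambda>n. gns_embed (s n))"
    using \<open>hs_cauchy G s\<close> s unfolding hs_cauchy_def by (simp add: gns_norm_eq gns_embed_diff gns_diff_closed)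
  then obtain l where l: "hs_tendsto H (\<lambda>n. gns_embed (s n)) l"
    using hs_complete[of "\<lambda>n. gns_embed (s n)"] s by auto
  have "l \<in> psi_closure" using psi_closure_closed[OF _ l] gns_embed_image s by blast
  then obtain Y where "Y \<in> GC" "gns_embed Y = l" unfolding gns_embed_image[symmetric] by blast
  then have "hs_tendsto G s Y"
    using l s unfolding hs_tendsto_def by (simp add: gns_norm_eq gns_embed_diff gns_diff_closed)
  then show ?thesis ..
qed

lemma hilbert_gns_space: "hilbert_space G"
proof -
  note simps = gns_closed gns_embed_simps
  show ?thesis
    unfolding hilbert_space_def
  proof (intro conjI ballI allI impI)
    fix X Y Z c d
    assume X: "X \<in> GC" and Y: "Y \<in> GC" and Z: "Z \<in> GC"
    show "hs_add G (hs_add G X Y) Z = hs_add G X (hs_add G Y Z)"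
      by (rule gns_embed_inj) (simp_all add: X Y Z simps hs_add_assoc)
    show "hs_add G X Y = hs_add G Y X"
      by (rule gns_embed_inj) (simp_all add: X Y simps hs_add_commute)
    show "hs_scale G c (hs_add G X Y) = hs_add G (hs_scale G c X) (hs_scale G c Y)"
      by (rule gns_embed_inj) (simp_all add: X Y simps hs_scale_add_right)
    show "hs_inner G X (hs_add G Y Z) = hs_inner G X Y + hs_inner G X Z"
      by (simp add: X Y Z simps)
    show "hs_inner G X (hs_scale G c Y) = c * hs_inner G X Y"
      by (simp add: X Y simps)
    show "hs_inner G Y X = cnj (hs_inner G X Y)"
      using hs_inner_commute[of "gns_embed X" "gns_embed Y"] by (simp add: X Y simps)
  next
    fix X c d
    assume X: "X \<in> GC"
    show "hs_add G (hs_zero G) X = X"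
      by (rule gns_embed_inj) (simp_all add: X simps hs_add_zero_left)
    show "\<exists>Y\<in>GC. hs_add G X Y = hs_zero G"
      by (rule bexI[of _ "hs_scale G (-1) X"], rule gns_embed_inj) (simp_all add: X simps hs_add_neg)
    show "hs_scale G 1 X = X"
      by (rule gns_embed_inj) (simp_all add: X simps hs_scale_one)
    show "hs_scale G c (hs_scale G d X) = hs_scale G (c * d) X"
      by (rule gns_embed_inj) (simp_all add: X simps hs_scale_scale)
    show "hs_scale G (c + d) X = hs_add G (hs_scale G c X) (hs_scale G d X)"
      by (rule gns_embed_inj) (simp_all add: X simps hs_scale_add_left)
    show "0 \<le> Re (hs_inner G X X)"
      by (simp add: X simps hs_inner_self_nonneg)
    show "hs_inner G X X = 0 \<Longrightarrow> X = hs_zero G"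
      by (rule gns_embed_inj) (simp_all add: X simps hs_inner_self_eq_zero)
  qed (simp_all add: gns_closed gns_space_complete)
qed

lemma gns_embed_bounded_linear: "hs_bounded_linear G H gns_embed"
  unfolding hs_bounded_linear_def
  by (intro conjI ballI allI exI[of _ 1]) (simp_all add: gns_embed_add gns_embed_scale gns_norm_eq)

text \<open>The adjoint of the isometry \<open>gns_embed\<close> is its inverse composed with the orthogonal
  projection onto its range \<open>psi_closure\<close>.\<close>

lemma gns_embed_adjoint_left_inverse:
  "\<exists>L'. hs_adjoint G H gns_embed L' \<and> (\<forall>X\<in>GC. L' (gns_embed X) = X)"
proof -
  obtain P where P: "\<And>y. y \<in> C \<Longrightarrow> P y \<in> psi_closure"
    and orth: "\<And>y v. y \<in> C \<Longrightarrow> v \<in> psi_closure \<Longrightarrow> \<langle>v, y \<ominus> P y\<rangle> = 0"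
    using orthogonal_projection_exists[OF closed_subspace_psi_closure] by metis
  have PC: "\<And>y. y \<in> C \<Longrightarrow> P y \<in> C" using P unfolding psi_closure_def by blast
  define L' where "L' y = inv_into GC gns_embed (P y)" for y
  have L': "L' y \<in> GC" "gns_embed (L' y) = P y" if "y \<in> C" for y
    unfolding L'_def using P[OF that] gns_embed_image by (auto intro: inv_into_into f_inv_into_f)
  have "hs_adjoint G H gns_embed L'"
    unfolding hs_adjoint_def
  proof (intro conjI ballI)
    fix X y
    assume "X \<in> GC" "y \<in> C"
    have "\<langle>gns_embed X, y \<ominus> P y\<rangle> = 0"
      using orth[OF \<open>y \<in> C\<close>] gns_embed_image \<open>X \<in> GC\<close> by blast
    then show "\<langle>gns_embed X, y\<rangle> = hs_inner G X (L' y)"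
      using \<open>X \<in> GC\<close> \<open>y \<in> C\<close> L' PC by (simp add: gns_inner_eq)
  qed (use L' in simp)
  moreover have "L' (gns_embed X) = X" if X: "X \<in> GC" for X
  proof -
    let ?x = "gns_embed X"
    have "?x \<ominus> P ?x = gns_embed (hs_sub G X (L' ?x))"
      using X L'[of ?x] by (simp add: gns_embed_diff)
    then have "?x \<ominus> P ?x \<in> psi_closure"
      using gns_embed_image gns_diff_closed[OF X L'(1)] X by (metis gns_embed_closed image_eqI)
    then have "\<langle>?x \<ominus> P ?x, ?x \<ominus> P ?x\<rangle> = 0" using orth[of ?x] X by simp
    then have "?x = gns_embed (L' ?x)" using X L'[of ?x] PC[of ?x] by (simp add: hs_eqI_inner_diff)
    then show ?thesis using gns_embed_inj X L'[of ?x] by simp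
  qed
  ultimately show ?thesis by blast
qed

lemma gns_embed_inverse_if_dense:
  assumes "psi_closure = C"
  shows "\<exists>M. hs_bounded_linear H G M \<and> hs_adjoint H G M gns_embed \<and>
    (\<forall>X\<in>GC. M (gns_embed X) = X) \<and> (\<forall>x\<in>C. gns_embed (M x) = x)"
proof -
  let ?M = "inv_into GC gns_embed"
  have bij: "bij_betw gns_embed GC C"
    using gns_embed_image assms gns_embed_inj unfolding bij_betw_def inj_on_def by blast
  have M: "?M x \<in> GC" "gns_embed (?M x) = x" if "x \<in> C" for x
    using bij that by (simp_all add: bij_betw_imp_surj_on inv_into_into f_inv_into_f)
  have "hs_bounded_linear H G ?M"
    unfolding hs_bounded_linear_def
  proof (intro conjI ballI allI exI[of _ 1])
    fix x y c
    assume "x \<in> C" "y \<in> C"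
    then show "?M (x \<oplus> y) = hs_add G (?M x) (?M y)"
      by (intro gns_embed_inj) (simp_all add: M gns_closed gns_embed_add)
    show "?M (c \<cdot> x) = hs_scale G c (?M x)"
      using \<open>x \<in> C\<close> by (intro gns_embed_inj) (simp_all add: M gns_closed gns_embed_scale)
  qed (simp_all add: M gns_norm_eq)
  moreover have "hs_adjoint H G ?M gns_embed"
    unfolding hs_adjoint_def by (simp add: M gns_inner_eq)
  moreover have "?M (gns_embed X) = X" if "X \<in> GC" for X
    using bij that by (simp add: bij_betw_inv_into_left)
  ultimately show ?thesis using M by blast
qed

end

section \<open>C*-algebras\<close>

locale cstar =
  fixes A :: "'a cstar_alg"
  assumes cstar_algebra: "cstar_algebra A"
begin

abbreviation cadd (infixl "+\<^sub>A" 65) where "a +\<^sub>A b \<equiv> ca_add A a b"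
abbreviation cscale (infixr "\<cdot>\<^sub>A" 75) where "c \<cdot>\<^sub>A a \<equiv> ca_scale A c a"
abbreviation cmul (infixl "*\<^sub>A" 70) where "a *\<^sub>A b \<equiv> ca_mul A a b"
abbreviation csub (infixl "-\<^sub>A" 65) where "a -\<^sub>A b \<equiv> ca_sub A a b"
abbreviation czero ("\<zero>\<^sub>A") where "\<zero>\<^sub>A \<equiv> ca_zero A"
abbreviation cone ("\<one>\<^sub>A") where "\<one>\<^sub>A \<equiv> ca_one A"
abbreviation cadj ("_\<^sup>\<dagger>" [1000] 999) where "a\<^sup>\<dagger> \<equiv> ca_star A a"
abbreviation cnorm ("\<parallel>_\<parallel>\<^sub>A") where "\<parallel>a\<parallel>\<^sub>A \<equiv> ca_norm A a"

lemma ca_add_assoc: "(a +\<^sub>A b) +\<^sub>A e = a +\<^sub>A (b +\<^sub>A e)"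
  and ca_add_commute: "a +\<^sub>A b = b +\<^sub>A a"
  and ca_add_zero_left: "\<zero>\<^sub>A +\<^sub>A a = a"
  and ca_scale_one: "1 \<cdot>\<^sub>A a = a"
  and ca_scale_scale: "c \<cdot>\<^sub>A (d \<cdot>\<^sub>A a) = (c * d) \<cdot>\<^sub>A a"
  and ca_scale_add_left: "(c + d) \<cdot>\<^sub>A a = c \<cdot>\<^sub>A a +\<^sub>A d \<cdot>\<^sub>A a"
  and ca_scale_add_right: "c \<cdot>\<^sub>A (a +\<^sub>A b) = c \<cdot>\<^sub>A a +\<^sub>A c \<cdot>\<^sub>A b"
  and ca_mul_one_right: "a *\<^sub>A \<one>\<^sub>A = a"
  and ca_mul_add_right: "a *\<^sub>A (b +\<^sub>A e) = a *\<^sub>A b +\<^sub>A a *\<^sub>A e"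
  and ca_mul_add_left: "(a +\<^sub>A b) *\<^sub>A e = a *\<^sub>A e +\<^sub>A b *\<^sub>A e"
  and ca_scale_mul_left: "(c \<cdot>\<^sub>A a) *\<^sub>A b = c \<cdot>\<^sub>A (a *\<^sub>A b)"
  and ca_scale_mul_right: "a *\<^sub>A (c \<cdot>\<^sub>A b) = c \<cdot>\<^sub>A (a *\<^sub>A b)"
  and ca_star_star: "(a\<^sup>\<dagger>)\<^sup>\<dagger> = a"
  and ca_star_add: "(a +\<^sub>A b)\<^sup>\<dagger> = a\<^sup>\<dagger> +\<^sub>A b\<^sup>\<dagger>"
  and ca_star_scale: "(c \<cdot>\<^sub>A a)\<^sup>\<dagger> = cnj c \<cdot>\<^sub>A a\<^sup>\<dagger>"
  and ca_star_mul: "(a *\<^sub>A b)\<^sup>\<dagger> = b\<^sup>\<dagger> *\<^sub>A a\<^sup>\<dagger>"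
  and ca_norm_eq_zero_iff: "\<parallel>a\<parallel>\<^sub>A = 0 \<longleftrightarrow> a = \<zero>\<^sub>A"
  and ca_norm_scale: "\<parallel>c \<cdot>\<^sub>A a\<parallel>\<^sub>A = cmod c * \<parallel>a\<parallel>\<^sub>A"
  and ca_norm_triangle: "\<parallel>a +\<^sub>A b\<parallel>\<^sub>A \<le> \<parallel>a\<parallel>\<^sub>A + \<parallel>b\<parallel>\<^sub>A"
  and ca_norm_mul: "\<parallel>a *\<^sub>A b\<parallel>\<^sub>A \<le> \<parallel>a\<parallel>\<^sub>A * \<parallel>b\<parallel>\<^sub>A"
  and ca_norm_star_mul_self: "\<parallel>a\<^sup>\<dagger> *\<^sub>A a\<parallel>\<^sub>A = \<parallel>a\<parallel>\<^sub>A^2"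
  by (use cstar_algebra in \<open>unfold cstar_algebra_def, simp\<close>)+

lemma ca_add_inverse: "\<exists>b. a +\<^sub>A b = \<zero>\<^sub>A"
  using cstar_algebra unfolding cstar_algebra_def by meson

lemma ca_complete:
  "(\<forall>e>0. \<exists>N. \<forall>m\<ge>N. \<forall>n\<ge>N. \<parallel>s m -\<^sub>A s n\<parallel>\<^sub>A < e) \<Longrightarrow> \<exists>l. (\<lambda>n. \<parallel>s n -\<^sub>A l\<parallel>\<^sub>A) \<longlonglongrightarrow> 0"
  using cstar_algebra unfolding cstar_algebra_def by blast

lemma ca_scale_zero_left: "0 \<cdot>\<^sub>A a = \<zero>\<^sub>A"
proof -
  obtain b where b: "0 \<cdot>\<^sub>A a +\<^sub>A b = \<zero>\<^sub>A" using ca_add_inverse by blast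
  have "\<zero>\<^sub>A = (0 \<cdot>\<^sub>A a +\<^sub>A 0 \<cdot>\<^sub>A a) +\<^sub>A b" using b ca_scale_add_left[of 0 0 a] by simp
  also have "\<dots> = 0 \<cdot>\<^sub>A a" using b by (simp add: ca_add_assoc ca_add_commute[of _ "\<zero>\<^sub>A"] ca_add_zero_left)
  finally show ?thesis by simp
qed

lemma ca_scale_zero_right: "c \<cdot>\<^sub>A \<zero>\<^sub>A = \<zero>\<^sub>A"
  using ca_scale_zero_left[of "\<zero>\<^sub>A"] ca_scale_scale[of c 0 "\<zero>\<^sub>A"] by simp

lemma ca_add_zero_right: "a +\<^sub>A \<zero>\<^sub>A = a"
  using ca_add_zero_left ca_add_commute by metis

lemma ca_add_neg: "a +\<^sub>A (-1) \<cdot>\<^sub>A a = \<zero>\<^sub>A" and ca_neg_add: "(-1) \<cdot>\<^sub>A a +\<^sub>A a = \<zero>\<^sub>A"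
  using ca_scale_add_left[of 1 "-1" a] ca_scale_one ca_scale_zero_left ca_add_commute by simp_all

lemma ca_diff_self [simp]: "a -\<^sub>A a = \<zero>\<^sub>A"
  unfolding ca_sub_def by (rule ca_add_neg)

lemma ca_diff_zero [simp]: "a -\<^sub>A \<zero>\<^sub>A = a"
  unfolding ca_sub_def ca_scale_zero_right ca_add_zero_right ..

lemma ca_norm_zero [simp]: "\<parallel>\<zero>\<^sub>A\<parallel>\<^sub>A = 0"
  using ca_norm_eq_zero_iff by simp

lemma ca_norm_nonneg [simp]: "0 \<le> \<parallel>a\<parallel>\<^sub>A"
  using ca_norm_triangle[of a "(-1) \<cdot>\<^sub>A a"] ca_norm_scale[of "-1" a] by (simp add: ca_add_neg)

lemma ca_eq_if_norm_diff_zero: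
  assumes "\<parallel>a -\<^sub>A b\<parallel>\<^sub>A = 0"
  shows "a = b"
proof -
  have "b = (a +\<^sub>A (-1) \<cdot>\<^sub>A b) +\<^sub>A b"
    using assms ca_norm_eq_zero_iff ca_add_zero_left unfolding ca_sub_def by simp
  also have "\<dots> = a" by (simp add: ca_add_assoc ca_neg_add ca_add_zero_right)
  finally show ?thesis by simp
qed

lemma ca_norm_diff_triangle: "\<parallel>a -\<^sub>A c\<parallel>\<^sub>A \<le> \<parallel>a -\<^sub>A b\<parallel>\<^sub>A + \<parallel>b -\<^sub>A c\<parallel>\<^sub>A"
proof -
  have "(a -\<^sub>A b) +\<^sub>A (b -\<^sub>A c) = a +\<^sub>A (((-1) \<cdot>\<^sub>A b +\<^sub>A b) +\<^sub>A (-1) \<cdot>\<^sub>A c)"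
    unfolding ca_sub_def by (simp add: ca_add_assoc)
  also have "\<dots> = a -\<^sub>A c" unfolding ca_neg_add ca_add_zero_left ca_sub_def ..
  finally show ?thesis using ca_norm_triangle[of "a -\<^sub>A b" "b -\<^sub>A c"] by simp
qed

lemma ca_norm_diff_commute: "\<parallel>b -\<^sub>A a\<parallel>\<^sub>A = \<parallel>a -\<^sub>A b\<parallel>\<^sub>A"
proof -
  have "b -\<^sub>A a = (-1) \<cdot>\<^sub>A (a -\<^sub>A b)"
    unfolding ca_sub_def ca_scale_add_right ca_scale_scale
    using ca_add_commute[of b "(-1) \<cdot>\<^sub>A a"] by (simp add: ca_scale_one)
  then show ?thesis by (simp add: ca_norm_scale)
qed

lemma ca_norm_le_diff: "\<parallel>a\<parallel>\<^sub>A \<le> \<parallel>a -\<^sub>A b\<parallel>\<^sub>A + \<parallel>b\<parallel>\<^sub>A"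
  using ca_norm_diff_triangle[of a "\<zero>\<^sub>A" b] by simp

lemma ca_norm_star [simp]: "\<parallel>a\<^sup>\<dagger>\<parallel>\<^sub>A = \<parallel>a\<parallel>\<^sub>A"
proof -
  have le: "\<parallel>b\<parallel>\<^sub>A \<le> \<parallel>b\<^sup>\<dagger>\<parallel>\<^sub>A" for b
  proof (cases "\<parallel>b\<parallel>\<^sub>A = 0")
    case False
    have "\<parallel>b\<parallel>\<^sub>A^2 \<le> \<parallel>b\<^sup>\<dagger>\<parallel>\<^sub>A * \<parallel>b\<parallel>\<^sub>A" using ca_norm_star_mul_self[of b] ca_norm_mul[of "b\<^sup>\<dagger>" b] by simp
    then show ?thesis using False ca_norm_nonneg[of b] by (simp add: power2_eq_square)
  qed simp
  show ?thesis using le[of a] le[of "a\<^sup>\<dagger>"] ca_star_star by (simp add: antisym)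
qed

lemma ca_convergent_if_geometric_steps:
  assumes step: "\<And>n. \<parallel>s (Suc n) -\<^sub>A s n\<parallel>\<^sub>A \<le> B * (1/2)^n"
  shows "\<exists>l. (\<lambda>n. \<parallel>s n -\<^sub>A l\<parallel>\<^sub>A) \<longlonglongrightarrow> 0"
proof (rule ca_complete, intro allI impI)
  fix e :: real
  assume "e > 0"
  have tail: "\<parallel>s (n + k) -\<^sub>A s n\<parallel>\<^sub>A \<le> 2 * B * (1/2)^n - 2 * B * (1/2)^(n + k)" for n k
  proof (induction k)
    case (Suc k)
    have "\<parallel>s (n + Suc k) -\<^sub>A s n\<parallel>\<^sub>A \<le> \<parallel>s (Suc (n + k)) -\<^sub>A s (n + k)\<parallel>\<^sub>A + \<parallel>s (n + k) -\<^sub>A s n\<parallel>\<^sub>A"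
      using ca_norm_diff_triangle by simp
    then show ?case using step[of "n + k"] Suc by simp
  qed simp
  have "0 \<le> B" using order_trans[OF ca_norm_nonneg step[of 0]] by simp
  have bound: "\<parallel>s m -\<^sub>A s n\<parallel>\<^sub>A \<le> 2 * B * (1/2)^N" if "m \<ge> N" "n \<ge> N" for m n N
  proof -
    have "\<parallel>s m -\<^sub>A s n\<parallel>\<^sub>A \<le> 2 * B * (1/2)^N" if "m \<ge> n" "n \<ge> N" for m n
    proof -
      obtain k where m: "m = n + k" using \<open>m \<ge> n\<close> le_Suc_ex by blast
      have "0 \<le> 2 * B * (1/2::real)^(n + k)" using \<open>0 \<le> B\<close> by simp
      then have "\<parallel>s m -\<^sub>A s n\<parallel>\<^sub>A \<le> 2 * B * (1/2)^n" unfolding m using tail[of n k] by linarith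
      also have "\<dots> \<le> 2 * B * (1/2)^N"
        using \<open>n \<ge> N\<close> \<open>0 \<le> B\<close> by (intro mult_left_mono power_decreasing) simp_all
      finally show ?thesis .
    qed
    then show ?thesis using that ca_norm_diff_commute by (cases "m \<ge> n") (auto, metis nat_le_linear)
  qed
  have "(\<lambda>N. 2 * B * (1/2::real)^N) \<longlonglongrightarrow> 2 * B * 0"
    by (intro tendsto_mult_left LIMSEQ_realpow_zero) simp_all
  then have "\<forall>\<^sub>F N in sequentially. 2 * B * (1/2)^N < e" using \<open>e > 0\<close> by (simp add: order_tendstoD(2))
  then obtain N where "2 * B * (1/2)^N < e" unfolding eventually_sequentially by auto
  then show "\<exists>N. \<forall>m\<ge>N. \<forall>n\<ge>N. \<parallel>s m -\<^sub>A s n\<parallel>\<^sub>A < e" using bound by (meson le_less_trans)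
qed

lemma ca_contraction_fixpoint:
  assumes maps: "\<And>u. \<parallel>u\<parallel>\<^sub>A \<le> r \<Longrightarrow> \<parallel>F u\<parallel>\<^sub>A \<le> r"
    and contraction: "\<And>p q. \<parallel>p\<parallel>\<^sub>A \<le> r \<Longrightarrow> \<parallel>q\<parallel>\<^sub>A \<le> r \<Longrightarrow> \<parallel>F p -\<^sub>A F q\<parallel>\<^sub>A \<le> (1/2) * \<parallel>p -\<^sub>A q\<parallel>\<^sub>A"
    and "0 \<le> r"
  shows "\<exists>y. \<parallel>y\<parallel>\<^sub>A \<le> r \<and> F y = y"
proof -
  define s where "s n = (F ^^ n) \<zero>\<^sub>A" for n
  have s_Suc: "s (Suc n) = F (s n)" for n unfolding s_def by simp
  have s_bound: "\<parallel>s n\<parallel>\<^sub>A \<le> r" for n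
    by (induction n) (simp_all add: s_def \<open>0 \<le> r\<close> maps)
  have "\<parallel>s (Suc n) -\<^sub>A s n\<parallel>\<^sub>A \<le> r * (1/2)^n" for n
  proof (induction n)
    case 0
    then show ?case using maps[of "\<zero>\<^sub>A"] \<open>0 \<le> r\<close> by (simp add: s_def)
  next
    case (Suc n)
    then show ?case using contraction[OF s_bound s_bound, of n "Suc n"] by (simp add: s_Suc ca_norm_diff_commute)
  qed
  then obtain y where y: "(\<lambda>n. \<parallel>s n -\<^sub>A y\<parallel>\<^sub>A) \<longlonglongrightarrow> 0"
    using ca_convergent_if_geometric_steps by blast
  have "\<parallel>y\<parallel>\<^sub>A \<le> r"
  proof (rule LIMSEQ_le_const)
    show "(\<lambda>n. r + \<parallel>s n -\<^sub>A y\<parallel>\<^sub>A) \<longlonglongrightarrow> r" using tendsto_add[OF tendsto_const y] by simp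
    have "\<parallel>y\<parallel>\<^sub>A \<le> r + \<parallel>s n -\<^sub>A y\<parallel>\<^sub>A" for n
      using ca_norm_le_diff[of y "s n"] s_bound[of n] ca_norm_diff_commute[of y "s n"] by linarith
    then show "\<exists>N. \<forall>n\<ge>N. \<parallel>y\<parallel>\<^sub>A \<le> r + \<parallel>s n -\<^sub>A y\<parallel>\<^sub>A" by blast
  qed
  have "\<parallel>F y -\<^sub>A y\<parallel>\<^sub>A \<le> 0"
  proof (rule LIMSEQ_le_const)
    show "(\<lambda>n. (1/2) * \<parallel>s n -\<^sub>A y\<parallel>\<^sub>A + \<parallel>s (Suc n) -\<^sub>A y\<parallel>\<^sub>A) \<longlonglongrightarrow> 0"
      using tendsto_add[OF tendsto_mult_right_zero[OF y, of "1/2"] y[THEN LIMSEQ_Suc]] by simp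
    have "\<parallel>F y -\<^sub>A y\<parallel>\<^sub>A \<le> (1/2) * \<parallel>s n -\<^sub>A y\<parallel>\<^sub>A + \<parallel>s (Suc n) -\<^sub>A y\<parallel>\<^sub>A" for n
      using ca_norm_diff_triangle[of "F y" y "s (Suc n)"] contraction[OF s_bound \<open>\<parallel>y\<parallel>\<^sub>A \<le> r\<close>, of n]
        ca_norm_diff_commute[of "F y" "F (s n)"] ca_norm_diff_commute[of y "s n"] s_Suc[of n] by simp
    then show "\<exists>N. \<forall>n\<ge>N. \<parallel>F y -\<^sub>A y\<parallel>\<^sub>A \<le> (1/2) * \<parallel>s n -\<^sub>A y\<parallel>\<^sub>A + \<parallel>s (Suc n) -\<^sub>A y\<parallel>\<^sub>A" by blast
  qed
  then have "F y = y" using ca_eq_if_norm_diff_zero ca_norm_nonneg by (meson antisym)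
  then show ?thesis using \<open>\<parallel>y\<parallel>\<^sub>A \<le> r\<close> by blast
qed

lemma ca_half_affine_diff: "(1/2) \<cdot>\<^sub>A (h +\<^sub>A p) -\<^sub>A (1/2) \<cdot>\<^sub>A (h +\<^sub>A q) = (1/2) \<cdot>\<^sub>A (p -\<^sub>A q)"
proof -
  have "(1/2) \<cdot>\<^sub>A (h +\<^sub>A p) -\<^sub>A (1/2) \<cdot>\<^sub>A (h +\<^sub>A q)
      = ((1/2) \<cdot>\<^sub>A h +\<^sub>A (-1/2) \<cdot>\<^sub>A h) +\<^sub>A ((1/2) \<cdot>\<^sub>A p +\<^sub>A (-1/2) \<cdot>\<^sub>A q)"
    unfolding ca_sub_def ca_scale_add_right ca_scale_scale
    by (simp add: ca_add_assoc ca_add_commute[of "(1/2) \<cdot>\<^sub>A p"] ca_add_commute[of "(-1/2) \<cdot>\<^sub>A h"])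
  also have "(1/2) \<cdot>\<^sub>A h +\<^sub>A (-1/2) \<cdot>\<^sub>A h = \<zero>\<^sub>A"
    using ca_scale_add_left[of "1/2" "-1/2" h] ca_scale_zero_left by simp
  finally show ?thesis unfolding ca_sub_def ca_scale_add_right ca_scale_scale by (simp add: ca_add_zero_left)
qed

lemma ca_mul_self_diff: "p *\<^sub>A p -\<^sub>A q *\<^sub>A q = p *\<^sub>A (p -\<^sub>A q) +\<^sub>A (p -\<^sub>A q) *\<^sub>A q"
proof -
  have "p *\<^sub>A (p -\<^sub>A q) +\<^sub>A (p -\<^sub>A q) *\<^sub>A q
      = p *\<^sub>A p +\<^sub>A (((-1) \<cdot>\<^sub>A (p *\<^sub>A q) +\<^sub>A p *\<^sub>A q) +\<^sub>A (-1) \<cdot>\<^sub>A (q *\<^sub>A q))"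
    unfolding ca_sub_def ca_mul_add_right ca_mul_add_left ca_scale_mul_left ca_scale_mul_right
    by (simp add: ca_add_assoc)
  then show ?thesis unfolding ca_neg_add ca_add_zero_left ca_sub_def by simp
qed

text \<open>A solution \<open>y\<close> satisfies \<open>(1 - y)\<^sup>2 = 1 - h\<close>.\<close>

lemma ca_selfadjoint_fixpoint:
  assumes h: "h\<^sup>\<dagger> = h" and "\<parallel>h\<parallel>\<^sub>A \<le> 1/2"
  shows "\<exists>y. y\<^sup>\<dagger> = y \<and> y = (1/2) \<cdot>\<^sub>A (h +\<^sub>A y *\<^sub>A y)"
proof -
  define F where "F u = (1/2) \<cdot>\<^sub>A (h +\<^sub>A u *\<^sub>A u)" for u
  have maps: "\<parallel>F u\<parallel>\<^sub>A \<le> 1/2" if "\<parallel>u\<parallel>\<^sub>A \<le> 1/2" for u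
  proof -
    have "\<parallel>u *\<^sub>A u\<parallel>\<^sub>A \<le> (1/2) * (1/2)"
      using ca_norm_mul[of u u] mult_mono[OF that that] by (simp add: order_trans)
    then have "\<parallel>h +\<^sub>A u *\<^sub>A u\<parallel>\<^sub>A \<le> 1" using ca_norm_triangle[of h "u *\<^sub>A u"] \<open>\<parallel>h\<parallel>\<^sub>A \<le> 1/2\<close> by linarith
    then show ?thesis unfolding F_def ca_norm_scale by simp
  qed
  have contraction: "\<parallel>F p -\<^sub>A F q\<parallel>\<^sub>A \<le> (1/2) * \<parallel>p -\<^sub>A q\<parallel>\<^sub>A" if "\<parallel>p\<parallel>\<^sub>A \<le> 1/2" "\<parallel>q\<parallel>\<^sub>A \<le> 1/2" for p q
  proof -
    have "\<parallel>p *\<^sub>A p -\<^sub>A q *\<^sub>A q\<parallel>\<^sub>A \<le> \<parallel>p\<parallel>\<^sub>A * \<parallel>p -\<^sub>A q\<parallel>\<^sub>A + \<parallel>p -\<^sub>A q\<parallel>\<^sub>A * \<parallel>q\<parallel>\<^sub>A"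
      unfolding ca_mul_self_diff using ca_norm_triangle ca_norm_mul by (meson add_mono order_trans)
    also have "\<dots> \<le> \<parallel>p -\<^sub>A q\<parallel>\<^sub>A" using that mult_right_mono[of "\<parallel>p\<parallel>\<^sub>A + \<parallel>q\<parallel>\<^sub>A" 1 "\<parallel>p -\<^sub>A q\<parallel>\<^sub>A"]
      by (simp add: algebra_simps)
    finally show ?thesis unfolding F_def ca_half_affine_diff ca_norm_scale by simp
  qed
  obtain y where y: "\<parallel>y\<parallel>\<^sub>A \<le> 1/2" "F y = y"
    using ca_contraction_fixpoint[OF maps contraction] by auto
  \<comment> \<open>\<open>y\<^sup>\<dagger>\<close> is another fixed point in the ball, and a contraction has only one\<close>
  have "F (y\<^sup>\<dagger>) = y\<^sup>\<dagger>"
    using arg_cong[OF y(2), of cadj] unfolding F_def ca_star_scale ca_star_add ca_star_mul h by simp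
  then have "\<parallel>y\<^sup>\<dagger> -\<^sub>A y\<parallel>\<^sub>A \<le> (1/2) * \<parallel>y\<^sup>\<dagger> -\<^sub>A y\<parallel>\<^sub>A"
    using contraction[of "y\<^sup>\<dagger>" y] y by simp
  then have "y\<^sup>\<dagger> = y" using ca_eq_if_norm_diff_zero ca_norm_nonneg[of "y\<^sup>\<dagger> -\<^sub>A y"] by force
  then show ?thesis using y(2) unfolding F_def by metis
qed

end

section \<open>Pointed representations\<close>

locale pointed_rep =
  fixes A :: "'a cstar_alg" and \<pi> :: "'a \<Rightarrow> 'h \<Rightarrow> 'h" and H :: "'h hilb" and \<Omega> :: 'h
  assumes cstar_algebra_A: "cstar_algebra A" and is_prep: "is_prep A \<pi> H \<Omega>"

sublocale pointed_rep \<subseteq> cstar A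
  by (rule cstar.intro[OF cstar_algebra_A])

sublocale pointed_rep \<subseteq> hilbert H
  using is_prep unfolding is_prep_def is_rep_def by unfold_locales blast

context pointed_rep
begin

lemma rep_bounded_linear: "hs_bounded_linear H H (\<pi> a)"
  and rep_add: "x \<in> C \<Longrightarrow> \<pi> (a +\<^sub>A b) x = \<pi> a x \<oplus> \<pi> b x"
  and rep_scale: "x \<in> C \<Longrightarrow> \<pi> (c \<cdot>\<^sub>A a) x = c \<cdot> \<pi> a x"
  and rep_mul: "x \<in> C \<Longrightarrow> \<pi> (a *\<^sub>A b) x = \<pi> a (\<pi> b x)"
  and rep_one: "x \<in> C \<Longrightarrow> \<pi> \<one>\<^sub>A x = x"
  and rep_adjoint: "hs_adjoint H H (\<pi> a) (\<pi> (a\<^sup>\<dagger>))"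
  and Omega_closed [simp]: "\<Omega> \<in> C"
  and norm_Omega: "\<parallel>\<Omega>\<parallel> = 1"
  using is_prep unfolding is_prep_def is_rep_def by blast+

lemma rep_closed [simp]: "x \<in> C \<Longrightarrow> \<pi> a x \<in> C"
  and rep_hadd: "x \<in> C \<Longrightarrow> y \<in> C \<Longrightarrow> \<pi> a (x \<oplus> y) = \<pi> a x \<oplus> \<pi> a y"
  and rep_hscale: "x \<in> C \<Longrightarrow> \<pi> a (c \<cdot> x) = c \<cdot> \<pi> a x"
  using rep_bounded_linear unfolding hs_bounded_linear_def by blast+

lemma rep_inner_adjoint: "x \<in> C \<Longrightarrow> y \<in> C \<Longrightarrow> \<langle>\<pi> a x, y\<rangle> = \<langle>x, \<pi> (a\<^sup>\<dagger>) y\<rangle>"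
  using rep_adjoint unfolding hs_adjoint_def by blast

lemma rep_zero_Omega: "\<pi> \<zero>\<^sub>A \<Omega> = \<zero>"
  using rep_scale[OF Omega_closed, of 0 "\<zero>\<^sub>A"] by (simp add: ca_scale_zero_left hs_scale_zero_left)

lemma rest_star_mul: "rest \<pi> H \<Omega> (a\<^sup>\<dagger> *\<^sub>A b) = \<langle>\<pi> a \<Omega>, \<pi> b \<Omega>\<rangle>"
  unfolding rest_def by (simp add: rep_mul rep_inner_adjoint)

end

sublocale pointed_rep \<subseteq> gns_embedding H A "rest \<pi> H \<Omega>" "\<lambda>a. \<pi> a \<Omega>"
  by unfold_locales (simp_all add: rep_add rep_scale rep_zero_Omega rest_star_mul)

context pointed_rep
begin

abbreviation "\<omega> \<equiv> rest \<pi> H \<Omega>"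

lemma m_map_eq_gns_embed: "m_map \<pi> H \<Omega> = gns_embed"
  by (rule ext) (simp add: m_map_def gns_embed_def)

lemma inner_Omega_Omega: "\<langle>\<Omega>, \<Omega>\<rangle> = 1"
  using power2_hs_norm[OF Omega_closed] hs_inner_self_real[OF Omega_closed] norm_Omega by simp

lemma rest_add: "\<omega> (a +\<^sub>A b) = \<omega> a + \<omega> b"
  and rest_scale: "\<omega> (c \<cdot>\<^sub>A a) = c * \<omega> a"
  unfolding rest_def by (simp_all add: rep_add rep_scale)

lemma norm_rep_Omega_le: "\<parallel>\<pi> a \<Omega>\<parallel>^2 \<le> 2 * \<parallel>a\<parallel>\<^sub>A^2"
proof (cases "\<parallel>a\<parallel>\<^sub>A = 0")
  case True
  then show ?thesis using ca_norm_eq_zero_iff rep_zero_Omega by simp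
next
  case False
  define t where "t = \<parallel>a\<parallel>\<^sub>A^2"
  have "t > 0" unfolding t_def using False ca_norm_nonneg[of a] by simp
  define h where "h = complex_of_real (1 / (2 * t)) \<cdot>\<^sub>A (a\<^sup>\<dagger> *\<^sub>A a)"
  have "h\<^sup>\<dagger> = h" unfolding h_def ca_star_scale ca_star_mul ca_star_star by simp
  moreover have "\<parallel>h\<parallel>\<^sub>A \<le> 1/2"
    unfolding h_def ca_norm_scale ca_norm_star_mul_self t_def[symmetric] norm_of_real using \<open>t > 0\<close> by simp
  ultimately obtain y where y: "y\<^sup>\<dagger> = y" "y = (1/2) \<cdot>\<^sub>A (h +\<^sub>A y *\<^sub>A y)"
    using ca_selfadjoint_fixpoint by blast
  have "\<omega> y = \<omega> ((1/2) \<cdot>\<^sub>A (h +\<^sub>A y\<^sup>\<dagger> *\<^sub>A y))" using arg_cong[OF y(2), of \<omega>] y(1) by simp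
  also have "\<dots> = (1/2) * (\<omega> h + \<langle>\<pi> y \<Omega>, \<pi> y \<Omega>\<rangle>)" by (simp only: rest_add rest_scale rest_star_mul)
  finally have "\<omega> y = (1/2) * (\<omega> h + \<langle>\<pi> y \<Omega>, \<pi> y \<Omega>\<rangle>)" .
  moreover have "\<langle>\<pi> y \<Omega>, \<Omega>\<rangle> = \<omega> y"
    using rest_star_mul[of y "\<one>\<^sub>A"] by (simp add: y(1) ca_mul_one_right rep_one)
  moreover have "\<langle>\<Omega>, \<pi> y \<Omega>\<rangle> = \<omega> y" unfolding rest_def ..
  ultimately have "\<langle>\<Omega> \<ominus> \<pi> y \<Omega>, \<Omega> \<ominus> \<pi> y \<Omega>\<rangle> = 1 - \<omega> h"
    by (simp add: inner_Omega_Omega algebra_simps)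
  then have "Re (\<omega> h) \<le> 1" using hs_inner_self_nonneg[of "\<Omega> \<ominus> \<pi> y \<Omega>"] by simp
  moreover have "\<omega> h = complex_of_real (1 / (2 * t)) * \<langle>\<pi> a \<Omega>, \<pi> a \<Omega>\<rangle>"
    unfolding h_def rest_scale rest_star_mul ..
  ultimately have "\<parallel>\<pi> a \<Omega>\<parallel>^2 / (2 * t) \<le> 1" using power2_hs_norm[of "\<pi> a \<Omega>"] by simp
  then show ?thesis using \<open>t > 0\<close> unfolding t_def by (simp add: field_simps)
qed

lemma is_state_rest: "is_state A \<omega>"
  unfolding is_state_def
proof (intro conjI allI exI[of _ 2])
  fix a
  have "cmod (\<omega> a) \<le> \<parallel>\<pi> a \<Omega>\<parallel>"
    using hs_Cauchy_Schwarz[of "\<pi> a \<Omega>" \<Omega>] norm_Omega unfolding rest_def by simp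
  also have "\<dots> \<le> 2 * \<parallel>a\<parallel>\<^sub>A"
  proof (rule power2_le_imp_le)
    have "(2 * \<parallel>a\<parallel>\<^sub>A)^2 = 4 * \<parallel>a\<parallel>\<^sub>A^2" by (simp add: power_mult_distrib)
    then show "\<parallel>\<pi> a \<Omega>\<parallel>^2 \<le> (2 * \<parallel>a\<parallel>\<^sub>A)^2"
      using norm_rep_Omega_le[of a] zero_le_power2[of "\<parallel>a\<parallel>\<^sub>A"] by linarith
  qed simp
  finally show "cmod (\<omega> a) \<le> 2 * \<parallel>a\<parallel>\<^sub>A" .
  have "\<omega> (a\<^sup>\<dagger> *\<^sub>A a) = complex_of_real (Re \<langle>\<pi> a \<Omega>, \<pi> a \<Omega>\<rangle>)"
    unfolding rest_star_mul using hs_inner_self_real by simp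
  then show "Im (\<omega> (a\<^sup>\<dagger> *\<^sub>A a)) = 0" "0 \<le> Re (\<omega> (a\<^sup>\<dagger> *\<^sub>A a))"
    using hs_inner_self_nonneg[of "\<pi> a \<Omega>"] by simp_all
qed (simp_all add: rest_def rep_add rep_scale rep_one inner_Omega_Omega)

lemma gns_pi_closed: "X \<in> GC \<Longrightarrow> gns_pi A \<omega> a X \<in> GC"
  and gns_embed_gns_pi: "X \<in> GC \<Longrightarrow> gns_embed (gns_pi A \<omega> a X) = \<pi> a (gns_embed X)"
proof -
  have lim: "hs_tendsto H (\<lambda>n. \<pi> (a *\<^sub>A gns_rep X n) \<Omega>) (\<pi> a (gns_embed X))" if "X \<in> GC"
    using hs_bounded_linear_tendsto[OF hilbert_axioms hilbert_axioms rep_bounded_linear _ tendsto_gns_rep[OF that]]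
    by (simp add: rep_mul)
  show "X \<in> GC \<Longrightarrow> gns_pi A \<omega> a X \<in> GC"
    using gns_class_in_carrier(1)[OF lim] unfolding gns_pi_def by simp
  show "X \<in> GC \<Longrightarrow> gns_embed (gns_pi A \<omega> a X) = \<pi> a (gns_embed X)"
    using gns_class_in_carrier(2)[OF lim] unfolding gns_pi_def by simp
qed

lemma gns_embed_Omega: "gns_embed (gns_vec A \<omega> \<one>\<^sub>A) = \<Omega>"
  by (simp add: gns_embed_gns_vec rep_one)

lemma is_prep_gns: "is_prep A (gns_pi A \<omega>) G (gns_vec A \<omega> \<one>\<^sub>A)"
proof -
  note simps = gns_pi_closed gns_embed_gns_pi gns_closed gns_embed_simps
  have "is_rep A (gns_pi A \<omega>) G"
    unfolding is_rep_def hs_bounded_linear_def hs_adjoint_def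
  proof (intro conjI allI ballI)
    fix a b c X Y
    assume X: "X \<in> GC" and Y: "Y \<in> GC"
    show "gns_pi A \<omega> a (hs_add G X Y) = hs_add G (gns_pi A \<omega> a X) (gns_pi A \<omega> a Y)"
      by (rule gns_embed_inj) (simp_all add: X Y simps rep_hadd)
    show "hs_inner G (gns_pi A \<omega> a X) Y = hs_inner G X (gns_pi A \<omega> (a\<^sup>\<dagger>) Y)"
      by (simp add: X Y simps rep_inner_adjoint)
  next
    fix a b c X
    assume X: "X \<in> GC"
    show "gns_pi A \<omega> a (hs_scale G c X) = hs_scale G c (gns_pi A \<omega> a X)"
      by (rule gns_embed_inj) (simp_all add: X simps rep_hscale)
    show "gns_pi A \<omega> (a +\<^sub>A b) X = hs_add G (gns_pi A \<omega> a X) (gns_pi A \<omega> b X)"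
      by (rule gns_embed_inj) (simp_all add: X simps rep_add)
    show "gns_pi A \<omega> (c \<cdot>\<^sub>A a) X = hs_scale G c (gns_pi A \<omega> a X)"
      by (rule gns_embed_inj) (simp_all add: X simps rep_scale)
    show "gns_pi A \<omega> (a *\<^sub>A b) X = gns_pi A \<omega> a (gns_pi A \<omega> b X)"
      by (rule gns_embed_inj) (simp_all add: X simps rep_mul)
    show "gns_pi A \<omega> \<one>\<^sub>A X = X"
      by (rule gns_embed_inj) (simp_all add: X simps rep_one)
  next
    fix a
    obtain B where "\<forall>x\<in>C. \<parallel>\<pi> a x\<parallel> \<le> B * \<parallel>x\<parallel>"
      using rep_bounded_linear unfolding hs_bounded_linear_def by blast
    then show "\<exists>B. \<forall>X\<in>GC. hs_norm G (gns_pi A \<omega> a X) \<le> B * hs_norm G X"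
      by (intro exI[of _ B]) (simp add: gns_norm_eq simps)
  qed (simp_all add: hilbert_gns_space gns_pi_closed)
  then show ?thesis
    unfolding is_prep_def by (simp add: gns_vec_closed gns_norm_eq gns_embed_Omega norm_Omega)
qed

lemma tendsto_m_map: "X \<in> GC \<Longrightarrow> x \<in> X \<Longrightarrow> hs_tendsto H (\<lambda>n. \<pi> (x n) \<Omega>) (m_map \<pi> H \<Omega> X)"
  unfolding m_map_eq_gns_embed by (rule tendsto_gns_embed)

lemma m_map_gns_vec: "m_map \<pi> H \<Omega> (gns_vec A \<omega> a) = \<pi> a \<Omega>"
  unfolding m_map_eq_gns_embed by (rule gns_embed_gns_vec)

lemma is_rep_mor_m_map: "is_rep_mor A (gns_pi A \<omega>) G (gns_vec A \<omega> \<one>\<^sub>A) \<pi> H \<Omega> (m_map \<pi> H \<Omega>)"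
  unfolding is_rep_mor_def m_map_eq_gns_embed
  using gns_embed_bounded_linear gns_embed_gns_pi gns_embed_Omega gns_embed_adjoint_left_inverse by blast

lemma is_cyclic_gns: "is_cyclic (gns_pi A \<omega>) G (gns_vec A \<omega> \<one>\<^sub>A)"
  unfolding is_cyclic_def
proof (intro ballI allI impI)
  fix X and e :: real
  assume "X \<in> GC" "e > 0"
  then obtain a where "\<parallel>gns_embed X \<ominus> \<pi> a \<Omega>\<parallel> < e"
    using gns_embed_image unfolding psi_closure_def by blast
  then show "\<exists>a. hs_norm G (hs_sub G X (gns_pi A \<omega> a (gns_vec A \<omega> \<one>\<^sub>A))) < e"
    using \<open>X \<in> GC\<close> by (auto simp: gns_norm_eq gns_embed_diff gns_diff_closed gns_pi_closed gns_vec_closed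
        gns_embed_gns_pi gns_embed_Omega)
qed

lemma m_map_inverse_if_cyclic:
  assumes "is_cyclic \<pi> H \<Omega>"
  shows "\<exists>M. is_rep_mor A \<pi> H \<Omega> (gns_pi A \<omega>) G (gns_vec A \<omega> \<one>\<^sub>A) M \<and>
    (\<forall>X\<in>GC. M (m_map \<pi> H \<Omega> X) = X) \<and> (\<forall>x\<in>C. m_map \<pi> H \<Omega> (M x) = x)"
proof -
  have "psi_closure = C" using assms unfolding is_cyclic_def psi_closure_def by blast
  then obtain M where M: "hs_bounded_linear H G M" "hs_adjoint H G M gns_embed"
    and left: "\<forall>X\<in>GC. M (gns_embed X) = X" and right: "\<forall>x\<in>C. gns_embed (M x) = x"
    using gns_embed_inverse_if_dense by blast
  have M_closed: "x \<in> C \<Longrightarrow> M x \<in> GC" for x using M(1) unfolding hs_bounded_linear_def by blast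
  have "is_rep_mor A \<pi> H \<Omega> (gns_pi A \<omega>) G (gns_vec A \<omega> \<one>\<^sub>A) M"
    unfolding is_rep_mor_def
  proof (intro conjI allI ballI exI)
    fix a x
    assume "x \<in> C"
    then show "M (\<pi> a x) = gns_pi A \<omega> a (M x)"
      by (intro gns_embed_inj) (simp_all add: M_closed gns_pi_closed gns_embed_gns_pi right)
  next
    show "M \<Omega> = gns_vec A \<omega> \<one>\<^sub>A" using left gns_vec_closed gns_embed_Omega by metis
  qed (use M left right in auto)
  then show ?thesis using left right unfolding m_map_eq_gns_embed by blast
qed

end

lemma is_prep_comp_hom:
  assumes "cstar_hom A' A f" and "is_prep A \<pi> H \<Omega>"
  shows "is_prep A' (\<lambda>a'. \<pi> (f a')) H \<Omega>"
  using assms unfolding cstar_hom_def is_prep_def is_rep_def by simp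

lemma rest_eq_if_rep_mor:
  assumes "is_prep A \<pi> H \<Omega>" and L: "is_rep_mor A \<pi> H \<Omega> \<pi>' H' \<Omega>' L"
  shows "rest \<pi> H \<Omega> = rest \<pi>' H' \<Omega>'"
proof
  fix a
  have \<Omega>: "\<Omega> \<in> hs_carrier H" and \<pi>\<Omega>: "\<pi> a \<Omega> \<in> hs_carrier H"
    using assms(1) unfolding is_prep_def is_rep_def hs_bounded_linear_def by blast+
  obtain L' where adj: "hs_adjoint H H' L L'" and inv: "\<forall>x\<in>hs_carrier H. L' (L x) = x"
    using L unfolding is_rep_mor_def by blast
  have "rest \<pi>' H' \<Omega>' a = hs_inner H' (L \<Omega>) (L (\<pi> a \<Omega>))"
    using L \<Omega> unfolding rest_def is_rep_mor_def by simp
  also have "\<dots> = hs_inner H \<Omega> (L' (L (\<pi> a \<Omega>)))"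
    using adj \<Omega> \<pi>\<Omega> L unfolding hs_adjoint_def is_rep_mor_def hs_bounded_linear_def by blast
  also have "\<dots> = rest \<pi> H \<Omega> a" using inv \<pi>\<Omega> unfolding rest_def by simp
  finally show "rest \<pi> H \<Omega> a = rest \<pi>' H' \<Omega>' a" ..
qed

lemma m_map_natural:
  assumes A: "cstar_algebra A" and p: "is_prep A \<pi> H \<Omega>" and p': "is_prep A \<pi>' H' \<Omega>'"
    and L: "is_rep_mor A \<pi> H \<Omega> \<pi>' H' \<Omega>' L"
    and X: "X \<in> hs_carrier (gns_space A (rest \<pi> H \<Omega>))"
  shows "L (m_map \<pi> H \<Omega> X) = m_map \<pi>' H' \<Omega>' X"
proof -
  interpret r: pointed_rep A \<pi> H \<Omega> using A p by unfold_locales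
  interpret r': pointed_rep A \<pi>' H' \<Omega>' using A p' by unfold_locales
  have rest: "rest \<pi> H \<Omega> = rest \<pi>' H' \<Omega>'" by (rule rest_eq_if_rep_mor[OF p L])
  have "hs_tendsto H' (\<lambda>n. L (\<pi> (gns_rep X n) \<Omega>)) (L (r.gns_embed X))"
    using L unfolding is_rep_mor_def
    by (intro hs_bounded_linear_tendsto[OF r.hilbert_axioms r'.hilbert_axioms _ _ r.tendsto_gns_rep[OF X]]) auto
  then have "hs_tendsto H' (\<lambda>n. \<pi>' (gns_rep X n) \<Omega>') (L (r.gns_embed X))"
    using L unfolding is_rep_mor_def by simp
  moreover have "hs_tendsto H' (\<lambda>n. \<pi>' (gns_rep X n) \<Omega>') (r'.gns_embed X)"
    using r'.tendsto_gns_rep X rest by simp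
  ultimately show ?thesis
    unfolding r.m_map_eq_gns_embed r'.m_map_eq_gns_embed by (rule r'.hs_tendsto_unique[rotated]) simp
qed

lemma m_map_gns_mor:
  assumes "cstar_algebra A'" "cstar_algebra A" and f: "cstar_hom A' A f" and p: "is_prep A \<pi> H \<Omega>"
    and X': "X' \<in> hs_carrier (gns_space A' (rest (\<lambda>a'. \<pi> (f a')) H \<Omega>))"
  shows "m_map (\<lambda>a'. \<pi> (f a')) H \<Omega> X' = m_map \<pi> H \<Omega> (gns_mor A f (rest \<pi> H \<Omega>) X')"
proof -
  interpret r: pointed_rep A \<pi> H \<Omega> using assms by unfold_locales
  interpret r': pointed_rep A' "\<lambda>a'. \<pi> (f a')" H \<Omega>
    using assms is_prep_comp_hom[OF f p] by unfold_locales
  show ?thesis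
    using r.gns_class_in_carrier(2)[OF r'.tendsto_gns_rep[OF X']]
    unfolding gns_mor_def r.m_map_eq_gns_embed r'.m_map_eq_gns_embed by simp
qed

theorem lemma5p24:
  shows
  "(\<forall>(A :: 'a cstar_alg) (\<pi> :: 'a \<Rightarrow> 'h \<Rightarrow> 'h) H \<Omega>.
      cstar_algebra A \<and> is_prep A \<pi> H \<Omega> \<longrightarrow>
        (let \<omega> = rest \<pi> H \<Omega> in
           is_state A \<omega> \<and>
           is_prep A (gns_pi A \<omega>) (gns_space A \<omega>) (gns_vec A \<omega> (ca_one A)) \<and>
           (\<forall>X\<in>hs_carrier (gns_space A \<omega>). \<forall>x\<in>X. hs_tendsto H (\<lambda>n. \<pi> (x n) \<Omega>) (m_map \<pi> H \<Omega> X)) \<and>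
           (\<forall>a. m_map \<pi> H \<Omega> (gns_vec A \<omega> a) = \<pi> a \<Omega>) \<and>
           is_rep_mor A (gns_pi A \<omega>) (gns_space A \<omega>) (gns_vec A \<omega> (ca_one A)) \<pi> H \<Omega>
             (m_map \<pi> H \<Omega>)))
   \<and>
   (\<forall>(A :: 'a cstar_alg) (\<pi> :: 'a \<Rightarrow> 'h \<Rightarrow> 'h) H \<Omega> (\<pi>' :: 'a \<Rightarrow> 'k \<Rightarrow> 'k) H' \<Omega>' L.
      cstar_algebra A \<and> is_prep A \<pi> H \<Omega> \<and> is_prep A \<pi>' H' \<Omega>' \<and>
      is_rep_mor A \<pi> H \<Omega> \<pi>' H' \<Omega>' L \<longrightarrow>
        rest \<pi> H \<Omega> = rest \<pi>' H' \<Omega>' \<and>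
        (\<forall>X\<in>hs_carrier (gns_space A (rest \<pi> H \<Omega>)).
            L (m_map \<pi> H \<Omega> X) = m_map \<pi>' H' \<Omega>' X))
   \<and>
   (\<forall>(A' :: 'b cstar_alg) (A :: 'a cstar_alg) f (\<pi> :: 'a \<Rightarrow> 'h \<Rightarrow> 'h) H \<Omega>.
      cstar_algebra A' \<and> cstar_algebra A \<and> cstar_hom A' A f \<and> is_prep A \<pi> H \<Omega> \<longrightarrow>
        (\<forall>X'\<in>hs_carrier (gns_space A' (rest (\<lambda>a'. \<pi> (f a')) H \<Omega>)).
            m_map (\<lambda>a'. \<pi> (f a')) H \<Omega> X' =
            m_map \<pi> H \<Omega> (gns_mor A f (rest \<pi> H \<Omega>) X')))
   \<and>
   (\<forall>(A :: 'a cstar_alg) (\<pi> :: 'a \<Rightarrow> 'h \<Rightarrow> 'h) H \<Omega>.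
      cstar_algebra A \<and> is_prep A \<pi> H \<Omega> \<and> is_cyclic \<pi> H \<Omega> \<longrightarrow>
        (let \<omega> = rest \<pi> H \<Omega> in
           is_cyclic (gns_pi A \<omega>) (gns_space A \<omega>) (gns_vec A \<omega> (ca_one A)) \<and>
           (\<exists>M. is_rep_mor A \<pi> H \<Omega> (gns_pi A \<omega>) (gns_space A \<omega>) (gns_vec A \<omega> (ca_one A)) M \<and>
                (\<forall>X\<in>hs_carrier (gns_space A \<omega>). M (m_map \<pi> H \<Omega> X) = X) \<and>
                (\<forall>x\<in>hs_carrier H. m_map \<pi> H \<Omega> (M x) = x))))"
  apply (intro conjI allI impI)
  subgoal premises prems for A \<pi> H \<Omega>
  proof -
    interpret pointed_rep A \<pi> H \<Omega> using prems by unfold_locales auto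
    show ?thesis
      unfolding Let_def using is_state_rest is_prep_gns tendsto_m_map m_map_gns_vec is_rep_mor_m_map by blast
  qed
  subgoal by (elim conjE) (rule rest_eq_if_rep_mor)
  subgoal by (elim conjE, intro ballI) (rule m_map_natural)
  subgoal by (elim conjE, intro ballI) (rule m_map_gns_mor)
  subgoal premises prems for A \<pi> H \<Omega>
  proof -
    interpret pointed_rep A \<pi> H \<Omega> using prems by unfold_locales auto
    show ?thesis unfolding Let_def using is_cyclic_gns m_map_inverse_if_cyclic prems by blast
  qed
  done

end
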